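(* Let $\mu$ be a probability distribution on $(E,\mathscr{E})$, $\xi:E\to E$ a measurable involution with $\mu\circ\xi^{-1}=\mu$ and $Qf=f\circ\xi$ the associated isometric involution, and $\psi:E\to E$ a measurable bijection with $\psi^{-1}=\xi\circ\psi\circ\xi$. Let $\nu:=\mu+\mu^{\xi\circ\psi}$ and $r(z):=\frac{{\rm d}\mu^{\xi\circ\psi}/{\rm d}\nu(z)}{{\rm d}\mu/{\rm d}\nu(z)}$ when both derivatives are positive, $r(z)=0$ otherwise. For $i\in\{1,2\}$ let $\phi_{i}:\mathbb{R}_{+}\to[0,1]$ satisfy $r\phi_{i}(r^{-1})=\phi_{i}(r)$ for $r>0$ and $\phi_{i}(0)=0$, and let \[P_{i,2}(z,{\rm d}z'):=\phi_{i}\circ r(z)\,\delta_{\psi(z)}({\rm d}z')+\big[1-\phi_{i}\circ r(z)\big]\delta_{\xi(z)}({\rm d}z').\] Let $P_{1,1}=P_{2,1}$ be a $(\mu,Q)$-reversible Markov transition. Assume $\phi_{1}\geq\phi_{2}$. Then for any $f\in L^{2}(\mu)$ with $Qf=f$ and any $\lambda\in[0,1)$, \[{\rm var}_{\lambda}(f,\{P_{1,1},P_{1,2}\})\leq{\rm var}_{\lambda}(f,\{P_{2,1},P_{2,2}\}).\] In particular, among all such $\phi$, the choice $\phi(r)=\min\{1,r\}$ achieves the smallest $\lambda$-asymptotic variance.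
   Context: $\mu^{\varphi}(A):=\mu(\varphi^{-1}(A))$; $\langle f,g\rangle_{\mu}=\int fg\,{\rm d}\mu$. A Markov kernel $P$ is $(\mu,Q)$-reversible if $\langle Pf,g\rangle_{\mu}=\langle f,QPQg\rangle_{\mu}$ for all $f,g\in L^{2}(\mu)$. With $\bar f=f-\mu(f)$ and $\lambda\in[0,1)$, ${\rm var}_{\lambda}(f,\{P_{1},P_{2}\})=\sum_{k\geq0}\big[\lambda^{2k}\langle\bar f,(P_{1}P_{2})^{k}({\rm Id}+\lambda P_{1})\bar f\rangle_{\mu}+\lambda^{2k}\langle\bar f,(P_{2}P_{1})^{k}({\rm Id}+\lambda P_{2})\bar f\rangle_{\mu}\big]-\|\bar f\|_{\mu}^{2}$. *)

theory Defs
  imports "HOL-Probability.Probability"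
begin

definition ip :: "'a measure \<Rightarrow> ('a \<Rightarrow> real) \<Rightarrow> ('a \<Rightarrow> real) \<Rightarrow> real" where
  "ip M f g = (\<integral>x. f x * g x \<partial>M)"

definition L2 :: "'a measure \<Rightarrow> ('a \<Rightarrow> real) \<Rightarrow> bool" where
  "L2 M f \<longleftrightarrow> f \<in> borel_measurable M \<and> integrable M (\<lambda>x. (f x)\<^sup>2)"

definition kop :: "('a \<Rightarrow> 'a measure) \<Rightarrow> ('a \<Rightarrow> real) \<Rightarrow> ('a \<Rightarrow> real)" where
  "kop K f = (\<lambda>z. \<integral>y. f y \<partial>(K z))"

definition markov_kernel :: "'a measure \<Rightarrow> ('a \<Rightarrow> 'a measure) \<Rightarrow> bool" where
  "markov_kernel M K \<longleftrightarrow> K \<in> measurable M (prob_algebra M)"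

definition reversible :: "'a measure \<Rightarrow> ('a \<Rightarrow> 'a) \<Rightarrow> (('a \<Rightarrow> real) \<Rightarrow> ('a \<Rightarrow> real)) \<Rightarrow> bool" where
  "reversible M \<xi> P \<longleftrightarrow>
     (\<forall>f g. L2 M f \<longrightarrow> L2 M g \<longrightarrow>
        ip M (P f) g = ip M f (\<lambda>z. P (\<lambda>y. g (\<xi> y)) (\<xi> z)))"

definition measure_add :: "'a measure \<Rightarrow> 'a measure \<Rightarrow> 'a measure" where
  "measure_add M N = measure_of (space M) (sets M) (\<lambda>A. emeasure M A + emeasure N A)"

definition ratio :: "'a measure \<Rightarrow> ('a \<Rightarrow> 'a) \<Rightarrow> ('a \<Rightarrow> 'a) \<Rightarrow> 'a \<Rightarrow> real" where
  "ratio M \<xi> \<psi> z =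
     (let N = distr M M (\<xi> \<circ> \<psi>);
          \<nu> = measure_add M N;
          d1 = RN_deriv \<nu> M z;
          d2 = RN_deriv \<nu> N z
      in if 0 < d1 \<and> d1 < \<infinity> \<and> 0 < d2 \<and> d2 < \<infinity>
         then enn2real d2 / enn2real d1 else 0)"

definition P2op :: "'a measure \<Rightarrow> ('a \<Rightarrow> 'a) \<Rightarrow> ('a \<Rightarrow> 'a) \<Rightarrow> (real \<Rightarrow> real)
    \<Rightarrow> ('a \<Rightarrow> real) \<Rightarrow> ('a \<Rightarrow> real)" where
  "P2op M \<xi> \<psi> \<phi> f = (\<lambda>z. \<phi> (ratio M \<xi> \<psi> z) * f (\<psi> z)
                          + (1 - \<phi> (ratio M \<xi> \<psi> z)) * f (\<xi> z))"

definition admissible :: "(real \<Rightarrow> real) \<Rightarrow> bool" where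
  "admissible \<phi> \<longleftrightarrow> \<phi> \<in> borel_measurable borel
     \<and> (\<forall>t\<ge>0. 0 \<le> \<phi> t \<and> \<phi> t \<le> 1)
     \<and> (\<forall>t>0. t * \<phi> (1 / t) = \<phi> t)
     \<and> \<phi> 0 = 0"

definition var_lam :: "'a measure \<Rightarrow> real \<Rightarrow> ('a \<Rightarrow> real)
    \<Rightarrow> (('a \<Rightarrow> real) \<Rightarrow> ('a \<Rightarrow> real)) \<Rightarrow> (('a \<Rightarrow> real) \<Rightarrow> ('a \<Rightarrow> real)) \<Rightarrow> real" where
  "var_lam M lam f P1 P2 =
     (let fb = (\<lambda>x. f x - (\<integral>y. f y \<partial>M))
      in (\<Sum>k. lam^(2*k) * ip M fb (((P1 \<circ> P2) ^^ k) (\<lambda>x. fb x + lam * P1 fb x))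
             + lam^(2*k) * ip M fb (((P2 \<circ> P1) ^^ k) (\<lambda>x. fb x + lam * P2 fb x)))
         - ip M fb fb)"

end

theory Submission
  imports Defs
begin

(* Write Q f = f o xi.  The kernel K and every move P_phi are (mu,Q)-reversible contractions of
   L2(mu), i.e. Q P is a self-adjoint contraction.  For a Q-invariant centred f the
   lambda-asymptotic variance is, up to the term ||f||^2, the value <f,X> + <f,Y> of the solution
   of X = f + lam K Y, Y = f + lam P X, expanded as a series in the alternating products of K and P.
   This value is the saddle value of a quadratic function that is convex along (d, -Q d), concave
   along (d, Q d) and increasing in the quadratic form <Q x, P x>; so it is monotone in that form
   (the comparison is made on truncations of the series, which solve the system up to errors of
   order lam^N).  For P_phi the form is ||x||^2 - 1/2 int phi(r) (x o psi - x o xi)^2 dmu, because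
   the balance condition r phi(1/r) = phi(r) makes phi(r) dmu invariant under the involution
   xi o psi.  It therefore decreases as phi increases, and min 1 dominates every admissible phi. *)

section \<open>Inner products on square-integrable functions\<close>

lemma L2_measurable: "L2 M f \<Longrightarrow> f \<in> borel_measurable M"
  by (simp add: L2_def)

lemma integrable_mult_L2:
  assumes "L2 M f" "L2 M g"
  shows "integrable M (\<lambda>x. f x * g x)"
proof (rule Bochner_Integration.integrable_bound)
  show "integrable M (\<lambda>x. (f x)\<^sup>2 + (g x)\<^sup>2)"
    using assms by (simp add: L2_def)
  show "(\<lambda>x. f x * g x) \<in> borel_measurable M"
    using assms by (simp add: L2_def borel_measurable_times)
  have "\<bar>a * b\<bar> \<le> a\<^sup>2 + b\<^sup>2" for a b :: real
  proof -
    have "2 * (\<bar>a\<bar> * \<bar>b\<bar>) \<le> a\<^sup>2 + b\<^sup>2" "0 \<le> \<bar>a\<bar> * \<bar>b\<bar>"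
      using sum_squares_bound[of "\<bar>a\<bar>" "\<bar>b\<bar>"] by simp_all
    then show ?thesis unfolding abs_mult by linarith
  qed
  then show "AE x in M. norm (f x * g x) \<le> norm ((f x)\<^sup>2 + (g x)\<^sup>2)"
    by simp
qed

lemma L2_add: "L2 M f \<Longrightarrow> L2 M g \<Longrightarrow> L2 M (\<lambda>x. f x + g x)"
  using integrable_mult_L2[of M f g]
  by (simp add: L2_def power2_sum borel_measurable_add mult.assoc)

lemma L2_scale: "L2 M f \<Longrightarrow> L2 M (\<lambda>x. c * f x)"
  by (simp add: L2_def power_mult_distrib borel_measurable_times)

lemma L2_uminus: "L2 M f \<Longrightarrow> L2 M (\<lambda>x. - f x)"
  using L2_scale[of M f "-1"] by simp

lemma L2_diff: "L2 M f \<Longrightarrow> L2 M g \<Longrightarrow> L2 M (\<lambda>x. f x - g x)"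
  using L2_add[OF _ L2_uminus, of M f g] by simp

lemma L2_const: "finite_measure M \<Longrightarrow> L2 M (\<lambda>x. c)"
  by (simp add: L2_def finite_measure.integrable_const)

lemma L2_sum: "(\<And>i. i \<in> I \<Longrightarrow> L2 M (f i)) \<Longrightarrow> L2 M (\<lambda>x. \<Sum>i\<in>I. f i x)"
proof (induction I rule: infinite_finite_induct)
  case (insert i I)
  then show ?case by (simp add: L2_add)
qed (simp_all add: L2_def)

lemma L2_cong: "L2 M f \<Longrightarrow> (\<And>x. x \<in> space M \<Longrightarrow> f x = g x) \<Longrightarrow> L2 M g"
  unfolding L2_def by (metis (no_types, lifting) Bochner_Integration.integrable_cong measurable_cong)

lemma ip_commute: "ip M f g = ip M g f"
  by (simp add: ip_def mult.commute)

lemma ip_cong: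
  "(\<And>x. x \<in> space M \<Longrightarrow> f x = f' x) \<Longrightarrow> (\<And>x. x \<in> space M \<Longrightarrow> g x = g' x) \<Longrightarrow>
    ip M f g = ip M f' g'"
  unfolding ip_def by (intro Bochner_Integration.integral_cong) auto

lemma ip_self_nonneg: "0 \<le> ip M f f"
  unfolding ip_def by (rule integral_nonneg_AE) auto

lemma ip_add_left:
  "L2 M f \<Longrightarrow> L2 M g \<Longrightarrow> L2 M h \<Longrightarrow> ip M (\<lambda>x. f x + g x) h = ip M f h + ip M g h"
  unfolding ip_def by (simp add: distrib_right integrable_mult_L2)

lemma ip_add_right:
  "L2 M f \<Longrightarrow> L2 M g \<Longrightarrow> L2 M h \<Longrightarrow> ip M h (\<lambda>x. f x + g x) = ip M h f + ip M h g"
  using ip_add_left[of M f g h] by (simp add: ip_commute)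

lemma ip_scale_left: "ip M (\<lambda>x. c * f x) h = c * ip M f h"
  unfolding ip_def by (simp add: mult.assoc)

lemma ip_scale_right: "ip M h (\<lambda>x. c * f x) = c * ip M h f"
  using ip_scale_left[of M c f h] by (simp add: ip_commute)

lemma ip_uminus_right: "ip M h (\<lambda>x. - f x) = - ip M h f"
  using ip_scale_right[of M h "-1" f] by simp

lemma ip_diff_left:
  "L2 M f \<Longrightarrow> L2 M g \<Longrightarrow> L2 M h \<Longrightarrow> ip M (\<lambda>x. f x - g x) h = ip M f h - ip M g h"
  unfolding ip_def by (simp add: left_diff_distrib integrable_mult_L2)

lemma ip_diff_right:
  "L2 M f \<Longrightarrow> L2 M g \<Longrightarrow> L2 M h \<Longrightarrow> ip M h (\<lambda>x. f x - g x) = ip M h f - ip M h g"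
  using ip_diff_left[of M f g h] by (simp add: ip_commute)

lemma ip_sum_right:
  "(\<And>i. i \<in> I \<Longrightarrow> L2 M (f i)) \<Longrightarrow> L2 M h \<Longrightarrow>
    ip M h (\<lambda>x. \<Sum>i\<in>I. f i x) = (\<Sum>i\<in>I. ip M h (f i))"
proof (induction I rule: infinite_finite_induct)
  case (insert i I)
  then show ?case by (simp add: ip_add_right L2_sum)
qed (simp_all add: ip_def)

lemma discriminant_le_of_nonneg:
  fixes a b c :: real
  assumes "0 \<le> c" and nonneg: "\<And>t. 0 \<le> a - 2 * t * b + t\<^sup>2 * c"
  shows "b\<^sup>2 \<le> a * c"
proof (cases "c = 0")
  case True
  have "b = 0"
  proof (rule ccontr)
    assume "b \<noteq> 0"
    then have "a - 2 * ((a + 1) / (2 * b)) * b + ((a + 1) / (2 * b))\<^sup>2 * c = -1"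
      using True by (simp add: field_simps)
    with nonneg show False by (metis neg_0_le_iff_le not_one_le_zero)
  qed
  with True show ?thesis by simp
next
  case False
  with \<open>0 \<le> c\<close> have "0 < c" by simp
  have "0 \<le> a - 2 * (b / c) * b + (b / c)\<^sup>2 * c" by (rule nonneg)
  also have "\<dots> = a - b\<^sup>2 / c" using \<open>0 < c\<close> by (simp add: field_simps power2_eq_square)
  finally show ?thesis using \<open>0 < c\<close> by (simp add: field_simps)
qed

lemma ip_Cauchy_Schwarz_square:
  assumes "L2 M f" "L2 M g"
  shows "(ip M f g)\<^sup>2 \<le> ip M f f * ip M g g"
proof (rule discriminant_le_of_nonneg[OF ip_self_nonneg])
  fix t
  have "0 \<le> ip M (\<lambda>x. f x - t * g x) (\<lambda>x. f x - t * g x)" by (rule ip_self_nonneg)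
  also have "\<dots> = ip M f f - 2 * t * ip M f g + t\<^sup>2 * ip M g g"
    using assms L2_scale[OF assms(2)]
    by (simp add: ip_diff_left ip_diff_right L2_diff ip_scale_left ip_scale_right
        ip_commute[of M g f] power2_eq_square algebra_simps)
  finally show "0 \<le> ip M f f - 2 * t * ip M f g + t\<^sup>2 * ip M g g" .
qed

definition l2norm :: "'a measure \<Rightarrow> ('a \<Rightarrow> real) \<Rightarrow> real" where
  "l2norm M f = sqrt (ip M f f)"

lemma l2norm_nonneg: "0 \<le> l2norm M f"
  by (simp add: l2norm_def ip_self_nonneg)

lemma l2norm_square: "(l2norm M f)\<^sup>2 = ip M f f"
  by (simp add: l2norm_def ip_self_nonneg)

lemma ip_Cauchy_Schwarz: "L2 M f \<Longrightarrow> L2 M g \<Longrightarrow> \<bar>ip M f g\<bar> \<le> l2norm M f * l2norm M g"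
  by (metis ip_Cauchy_Schwarz_square l2norm_nonneg l2norm_square power_mult_distrib
      real_sqrt_abs real_sqrt_le_mono zero_le_mult_iff real_sqrt_mult l2norm_def)

lemma l2norm_add:
  assumes "L2 M f" "L2 M g"
  shows "l2norm M (\<lambda>x. f x + g x) \<le> l2norm M f + l2norm M g"
proof -
  have "(l2norm M (\<lambda>x. f x + g x))\<^sup>2 = ip M f f + 2 * ip M f g + ip M g g"
    using assms by (simp add: l2norm_square ip_add_left ip_add_right L2_add ip_commute[of M g f])
  also have "\<dots> \<le> (l2norm M f + l2norm M g)\<^sup>2"
    using ip_Cauchy_Schwarz[OF assms] by (simp add: power2_sum l2norm_square)
  finally show ?thesis
    using l2norm_nonneg by (meson add_nonneg_nonneg power2_le_imp_le)
qed

lemma l2norm_scale: "l2norm M (\<lambda>x. c * f x) = \<bar>c\<bar> * l2norm M f"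
  by (simp add: l2norm_def ip_scale_left ip_scale_right real_sqrt_mult
      mult.assoc[symmetric] power2_eq_square[symmetric])

lemma l2norm_uminus: "l2norm M (\<lambda>x. - f x) = l2norm M f"
  using l2norm_scale[of M "-1" f] by simp

lemma l2norm_diff:
  assumes "L2 M f" "L2 M g"
  shows "l2norm M (\<lambda>x. f x - g x) \<le> l2norm M f + l2norm M g"
  using l2norm_add[OF assms(1) L2_uminus[OF assms(2)]] by (simp add: l2norm_uminus)

lemma l2norm_sum:
  "(\<And>i. i \<in> I \<Longrightarrow> L2 M (f i)) \<Longrightarrow> l2norm M (\<lambda>x. \<Sum>i\<in>I. f i x) \<le> (\<Sum>i\<in>I. l2norm M (f i))"
proof (induction I rule: infinite_finite_induct)
  case (insert i I)
  then have "l2norm M (\<lambda>x. \<Sum>i\<in>insert i I. f i x) \<le> l2norm M (f i) + l2norm M (\<lambda>x. \<Sum>i\<in>I. f i x)"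
    using l2norm_add[of M "f i" "\<lambda>x. \<Sum>i\<in>I. f i x"] by (simp add: L2_sum)
  with insert show ?case by simp
qed (simp_all add: l2norm_def ip_def)

section \<open>Reversible contractions\<close>

text \<open>The operators below need not be additive pointwise (\<open>kop K\<close> integrates \<open>f\<close> against
  \<open>K z\<close> only where \<open>f\<close> is \<open>K z\<close>-integrable), so linearity is only used weakly, through an
  adjoint.\<close>

definition adjoint_on ::
  "'a measure \<Rightarrow> (('a \<Rightarrow> real) \<Rightarrow> 'a \<Rightarrow> real) \<Rightarrow> (('a \<Rightarrow> real) \<Rightarrow> 'a \<Rightarrow> real) \<Rightarrow> bool" where
  "adjoint_on M P P' \<longleftrightarrow> (\<forall>f. L2 M f \<longrightarrow> L2 M (P f) \<and> L2 M (P' f))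
     \<and> (\<forall>f g. L2 M f \<longrightarrow> L2 M g \<longrightarrow> ip M (P f) g = ip M f (P' g))"

lemma adjoint_onD:
  assumes "adjoint_on M P P'" "L2 M f"
  shows "L2 M (P f)" "L2 M (P' f)" "L2 M g \<Longrightarrow> ip M (P f) g = ip M f (P' g)"
  using assms by (auto simp: adjoint_on_def)

lemma adjoint_on_comp:
  "adjoint_on M P P' \<Longrightarrow> adjoint_on M R R' \<Longrightarrow> adjoint_on M (P \<circ> R) (R' \<circ> P')"
  by (simp add: adjoint_on_def)

lemma adjoint_on_funpow: "adjoint_on M P P' \<Longrightarrow> adjoint_on M (P ^^ k) (P' ^^ k)"
proof (induction k)
  case 0
  then show ?case by (simp add: adjoint_on_def)
next
  case (Suc k)
  then have "adjoint_on M (P \<circ> P ^^ k) (P' ^^ k \<circ> P')"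
    by (intro adjoint_on_comp)
  then show ?case by (metis funpow.simps(2) funpow_Suc_right)
qed

lemma ip_adjoint_add:
  assumes "adjoint_on M P P'" "L2 M f" "L2 M g" "L2 M v"
  shows "ip M (P (\<lambda>x. f x + g x)) v = ip M (P f) v + ip M (P g) v"
  using assms by (simp add: adjoint_onD L2_add ip_add_left)

lemma ip_adjoint_scale:
  assumes "adjoint_on M P P'" "L2 M f" "L2 M v"
  shows "ip M (P (\<lambda>x. c * f x)) v = c * ip M (P f) v"
  using assms by (simp add: adjoint_onD L2_scale ip_scale_left)

lemma ip_adjoint_sum:
  assumes "adjoint_on M P P'" "\<And>i. i \<in> I \<Longrightarrow> L2 M (f i)" "L2 M v"
  shows "ip M (P (\<lambda>x. \<Sum>i\<in>I. f i x)) v = (\<Sum>i\<in>I. ip M (P (f i)) v)"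
  using assms ip_sum_right[of I M f "P' v"]
  by (simp add: adjoint_onD L2_sum ip_commute[of M _ "P' v"])

lemma ip_adjoint_cong:
  assumes "adjoint_on M P P'" "L2 M f" "\<And>x. x \<in> space M \<Longrightarrow> f x = g x" "L2 M v"
  shows "ip M (P f) v = ip M (P g) v"
proof -
  have "L2 M g" using assms L2_cong by blast
  with assms show ?thesis by (simp add: adjoint_onD) (rule ip_cong, auto)
qed

definition precomp :: "('a \<Rightarrow> 'a) \<Rightarrow> ('a \<Rightarrow> real) \<Rightarrow> 'a \<Rightarrow> real" where
  "precomp \<xi> f x = f (\<xi> x)"

definition reversible_contraction ::
  "'a measure \<Rightarrow> ('a \<Rightarrow> 'a) \<Rightarrow> (('a \<Rightarrow> real) \<Rightarrow> 'a \<Rightarrow> real) \<Rightarrow> bool" where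
  "reversible_contraction M \<xi> P \<longleftrightarrow> reversible M \<xi> P
     \<and> (\<forall>f. L2 M f \<longrightarrow> L2 M (P f) \<and> ip M (P f) (P f) \<le> ip M f f)"

locale measure_preserving_involution =
  fixes M :: "'a measure" and \<xi> :: "'a \<Rightarrow> 'a"
  assumes xi_meas: "\<xi> \<in> measurable M M"
    and xi_inv: "\<forall>x\<in>space M. \<xi> (\<xi> x) = x"
    and xi_pres: "distr M M \<xi> = M"
begin

abbreviation Q where "Q \<equiv> precomp \<xi>"

lemma L2_Q: "L2 M f \<Longrightarrow> L2 M (Q f)"
  using xi_pres integrable_distr_eq[OF xi_meas, of "\<lambda>x. (f x)\<^sup>2"]
    measurable_compose[OF xi_meas, of f]
  by (auto simp: L2_def precomp_def[abs_def])

lemma ip_Q: "L2 M f \<Longrightarrow> L2 M g \<Longrightarrow> ip M (Q f) (Q g) = ip M f g"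
  using integral_distr[OF xi_meas, of "\<lambda>x. f x * g x"] xi_pres
  by (simp add: ip_def precomp_def L2_def borel_measurable_times)

lemma Q_Q: "x \<in> space M \<Longrightarrow> Q (Q f) x = f x"
  using xi_inv by (simp add: precomp_def)

lemma ip_Q_swap: "L2 M f \<Longrightarrow> L2 M g \<Longrightarrow> ip M (Q f) g = ip M f (Q g)"
  using ip_Q[of "Q f" g] ip_cong[of M "Q (Q f)" f "Q g" "Q g"] by (simp add: L2_Q Q_Q)

lemma l2norm_Q: "L2 M f \<Longrightarrow> l2norm M (Q f) = l2norm M f"
  by (simp add: l2norm_def ip_Q)

context
  fixes P assumes P: "reversible_contraction M \<xi> P"
begin

lemma L2_rev_contraction: "L2 M f \<Longrightarrow> L2 M (P f)"
  using P by (simp add: reversible_contraction_def)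

lemma ip_rev_contraction: "L2 M f \<Longrightarrow> L2 M g \<Longrightarrow> ip M (P f) g = ip M f (Q (P (Q g)))"
  using P by (simp add: reversible_contraction_def reversible_def precomp_def[abs_def])

lemma adjoint_on_rev_contraction: "adjoint_on M P (\<lambda>g. Q (P (Q g)))"
  by (simp add: adjoint_on_def ip_rev_contraction L2_rev_contraction L2_Q)

lemma l2norm_rev_contraction: "L2 M f \<Longrightarrow> l2norm M (P f) \<le> l2norm M f"
  using P by (simp add: reversible_contraction_def l2norm_def)

text \<open>Reversibility says exactly that \<open>Q P\<close> is self-adjoint.\<close>

lemma ip_Q_rev_contraction_commute:
  assumes "L2 M f" "L2 M g"
  shows "ip M (Q f) (P g) = ip M (Q g) (P f)"
proof -
  have "ip M (Q f) (P g) = ip M g (Q (P (Q (Q f))))"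
    using assms by (simp add: ip_commute[of M "Q f"] ip_rev_contraction L2_Q)
  also have "\<dots> = ip M (Q g) (P (Q (Q f)))"
    using assms by (simp add: ip_Q_swap L2_Q L2_rev_contraction)
  also have "\<dots> = ip M (Q g) (P f)"
    using ip_adjoint_cong[OF adjoint_on_rev_contraction, of "Q (Q f)" f "Q g"] assms
    by (simp add: L2_Q Q_Q ip_commute[of M "Q g"])
  finally show ?thesis .
qed

lemma abs_ip_Q_rev_contraction_le: "L2 M f \<Longrightarrow> \<bar>ip M (Q f) (P f)\<bar> \<le> ip M f f"
  using ip_Cauchy_Schwarz[of M "Q f" "P f"] l2norm_rev_contraction[of f]
    mult_left_mono[OF l2norm_rev_contraction[of f] l2norm_nonneg[of M f]]
  by (simp add: L2_Q L2_rev_contraction l2norm_Q l2norm_square[symmetric] power2_eq_square)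

end

lemma reversible_if_ip_Q_commute:
  assumes L2: "\<And>f. L2 M f \<Longrightarrow> L2 M (P f)"
    and comm: "\<And>f g. L2 M f \<Longrightarrow> L2 M g \<Longrightarrow> ip M (Q f) (P g) = ip M (Q g) (P f)"
  shows "reversible M \<xi> P"
  unfolding reversible_def
proof (intro allI impI)
  fix f g assume f: "L2 M f" and g: "L2 M g"
  have "ip M (P f) g = ip M (Q (Q g)) (P f)"
    by (simp add: ip_commute[of M "P f"] Q_Q cong: ip_cong)
  also have "\<dots> = ip M (Q f) (P (Q g))" using comm f g by (simp add: L2_Q)
  also have "\<dots> = ip M f (Q (P (Q g)))" using f g by (simp add: ip_Q_swap L2 L2_Q)
  finally show "ip M (P f) g = ip M f (\<lambda>z. P (\<lambda>y. g (\<xi> y)) (\<xi> z))"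
    by (simp add: precomp_def[abs_def])
qed

end

section \<open>The asymptotic variance as an alternating series\<close>

primrec alternating ::
  "(('a \<Rightarrow> real) \<Rightarrow> 'a \<Rightarrow> real) \<Rightarrow> (('a \<Rightarrow> real) \<Rightarrow> 'a \<Rightarrow> real) \<Rightarrow> ('a \<Rightarrow> real) \<Rightarrow> nat \<Rightarrow> 'a \<Rightarrow> real"
where
  "alternating P1 P2 u 0 = u"
| "alternating P1 P2 u (Suc n) = P1 (alternating P2 P1 u n)"

lemma funpow_comp_shift: "((f \<circ> g) ^^ k) (f x) = f (((g \<circ> f) ^^ k) x)"
  by (induction k) auto

lemma alternating_even: "alternating P1 P2 u (2 * k) = ((P1 \<circ> P2) ^^ k) u"
  by (induction k) auto

lemma alternating_odd: "alternating P1 P2 u (Suc (2 * k)) = ((P1 \<circ> P2) ^^ k) (P1 u)"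
  by (simp add: alternating_even funpow_comp_shift)

definition alternating_series ::
  "'a measure \<Rightarrow> (('a \<Rightarrow> real) \<Rightarrow> 'a \<Rightarrow> real) \<Rightarrow> (('a \<Rightarrow> real) \<Rightarrow> 'a \<Rightarrow> real) \<Rightarrow> ('a \<Rightarrow> real) \<Rightarrow> real \<Rightarrow> real"
where
  "alternating_series M P1 P2 u lam =
     (\<Sum>n. lam ^ n * (ip M u (alternating P1 P2 u n) + ip M u (alternating P2 P1 u n)))"

context measure_preserving_involution
begin

context
  fixes P1 P2 assumes P1: "reversible_contraction M \<xi> P1" and P2: "reversible_contraction M \<xi> P2"
begin

lemma L2_alternating: "L2 M u \<Longrightarrow> L2 M (alternating P1 P2 u n) \<and> L2 M (alternating P2 P1 u n)"
  by (induction n) (auto simp: L2_rev_contraction[OF P1] L2_rev_contraction[OF P2])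

lemma l2norm_alternating:
  "L2 M u \<Longrightarrow> l2norm M (alternating P1 P2 u n) \<le> l2norm M u \<and> l2norm M (alternating P2 P1 u n) \<le> l2norm M u"
proof (induction n)
  case (Suc n)
  then show ?case
    using L2_alternating[of u n] l2norm_rev_contraction[OF P1, of "alternating P2 P1 u n"]
      l2norm_rev_contraction[OF P2, of "alternating P1 P2 u n"]
    by auto
qed simp

lemma summable_alternating_terms:
  assumes u: "L2 M u" and lam: "0 \<le> lam" "lam < 1"
  shows "summable (\<lambda>n. lam ^ n * (ip M u (alternating P1 P2 u n) + ip M u (alternating P2 P1 u n)))"
proof (rule summable_comparison_test)
  have bound: "\<bar>ip M u v\<bar> \<le> ip M u u" if "L2 M v" "l2norm M v \<le> l2norm M u" for v
  proof -
    have "\<bar>ip M u v\<bar> \<le> l2norm M u * l2norm M v" by (rule ip_Cauchy_Schwarz[OF u that(1)])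
    also have "\<dots> \<le> l2norm M u * l2norm M u" by (rule mult_left_mono[OF that(2) l2norm_nonneg])
    finally show ?thesis by (simp add: l2norm_square[symmetric] power2_eq_square)
  qed
  have "\<bar>ip M u (alternating P1 P2 u n) + ip M u (alternating P2 P1 u n)\<bar> \<le> 2 * ip M u u" for n
  proof -
    have "\<bar>ip M u (alternating P1 P2 u n)\<bar> \<le> ip M u u" "\<bar>ip M u (alternating P2 P1 u n)\<bar> \<le> ip M u u"
      using bound L2_alternating[OF u, of n] l2norm_alternating[OF u, of n] by simp_all
    then show ?thesis by linarith
  qed
  then have "lam ^ n * \<bar>ip M u (alternating P1 P2 u n) + ip M u (alternating P2 P1 u n)\<bar>
      \<le> 2 * ip M u u * lam ^ n" for n
    using lam by (simp add: mult_left_mono mult.commute)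
  then show "\<exists>N. \<forall>n\<ge>N. norm (lam ^ n * (ip M u (alternating P1 P2 u n) + ip M u (alternating P2 P1 u n)))
      \<le> 2 * ip M u u * lam ^ n"
    using lam by (simp add: abs_mult)
  show "summable (\<lambda>n. 2 * ip M u u * lam ^ n)"
    using lam by (intro summable_mult summable_geometric) auto
qed

lemma alternating_series_regroup:
  assumes u: "L2 M u" and lam: "0 \<le> lam" "lam < 1"
  shows "(\<Sum>k. lam ^ (2 * k) * ip M u (((P1 \<circ> P2) ^^ k) (\<lambda>x. u x + lam * P1 u x))
            + lam ^ (2 * k) * ip M u (((P2 \<circ> P1) ^^ k) (\<lambda>x. u x + lam * P2 u x)))
         = alternating_series M P1 P2 u lam"
proof -
  define c where "c n = lam ^ n * (ip M u (alternating P1 P2 u n) + ip M u (alternating P2 P1 u n))" for n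
  have adj: "adjoint_on M ((Pa \<circ> Pb) ^^ k) (((\<lambda>g. Q (Pb (Q g))) \<circ> (\<lambda>g. Q (Pa (Q g)))) ^^ k)"
    if "reversible_contraction M \<xi> Pa" "reversible_contraction M \<xi> Pb" for Pa Pb k
    using that by (intro adjoint_on_funpow adjoint_on_comp adjoint_on_rev_contraction)
  have split: "ip M u (((Pa \<circ> Pb) ^^ k) (\<lambda>x. u x + lam * Pa u x))
      = ip M u (((Pa \<circ> Pb) ^^ k) u) + lam * ip M u (((Pa \<circ> Pb) ^^ k) (Pa u))"
    if Pa: "reversible_contraction M \<xi> Pa" and Pb: "reversible_contraction M \<xi> Pb" for Pa Pb k
    using ip_adjoint_add[OF adj[OF Pa Pb] u L2_scale[OF L2_rev_contraction[OF Pa u]] u]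
      ip_adjoint_scale[OF adj[OF Pa Pb] L2_rev_contraction[OF Pa u] u]
    by (simp add: ip_commute[of M u])
  have pairs: "lam ^ (2 * k) * ip M u (((P1 \<circ> P2) ^^ k) (\<lambda>x. u x + lam * P1 u x))
      + lam ^ (2 * k) * ip M u (((P2 \<circ> P1) ^^ k) (\<lambda>x. u x + lam * P2 u x))
      = c (2 * k) + c (Suc (2 * k))" for k
    unfolding split[OF P1 P2] split[OF P2 P1] c_def alternating_even alternating_odd
    by (simp add: algebra_simps)
  have "summable c" unfolding c_def by (rule summable_alternating_terms[OF u lam])
  then have "(\<lambda>k. c (2 * k) + c (Suc (2 * k))) sums (\<Sum>n. c n)"
    using sums_group[OF summable_sums, of c 2] by (simp add: mult.commute numeral_2_eq_2)
  then show ?thesis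
    unfolding pairs alternating_series_def c_def[symmetric] by (rule sums_unique[symmetric])
qed

end

end

section \<open>Comparison by a saddle-point argument\<close>

definition approx_solution ::
  "'a measure \<Rightarrow> (('a \<Rightarrow> real) \<Rightarrow> 'a \<Rightarrow> real) \<Rightarrow> (('a \<Rightarrow> real) \<Rightarrow> 'a \<Rightarrow> real) \<Rightarrow> ('a \<Rightarrow> real) \<Rightarrow> real
    \<Rightarrow> real \<Rightarrow> ('a \<Rightarrow> real) \<Rightarrow> ('a \<Rightarrow> real) \<Rightarrow> bool"
where
  "approx_solution M P1 P2 u lam eps X Y \<longleftrightarrow> L2 M X \<and> L2 M Y \<and>
     (\<exists>e1 e2. L2 M e1 \<and> L2 M e2 \<and> l2norm M e1 \<le> eps \<and> l2norm M e2 \<le> eps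
       \<and> (\<forall>v. L2 M v \<longrightarrow> ip M v X - lam * ip M v (P1 Y) = ip M v u + ip M v e1)
       \<and> (\<forall>v. L2 M v \<longrightarrow> ip M v Y - lam * ip M v (P2 X) = ip M v u + ip M v e2))"

context measure_preserving_involution
begin

text \<open>For \<open>Q\<close>-invariant \<open>u\<close>, the solution of \<open>X = u + lam P1 Y\<close>, \<open>Y = u + lam P2 X\<close> is the
  critical point of the following function, with critical value \<open>ip M u X + ip M u Y\<close>.
  Its quadratic part (the case \<open>u = 0\<close>) is convex along \<open>(d, - Q d)\<close> and concave along
  \<open>(d, Q d)\<close>, and it increases with the quadratic form \<open>ip M (Q x) (P2 x)\<close>.\<close>

definition lagrangian ::
  "(('a \<Rightarrow> real) \<Rightarrow> 'a \<Rightarrow> real) \<Rightarrow> (('a \<Rightarrow> real) \<Rightarrow> 'a \<Rightarrow> real) \<Rightarrow> ('a \<Rightarrow> real) \<Rightarrow> real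
    \<Rightarrow> ('a \<Rightarrow> real) \<Rightarrow> ('a \<Rightarrow> real) \<Rightarrow> real"
where
  "lagrangian P1 P2 u lam y x = 2 * ip M u y + 2 * ip M u x - 2 * ip M (Q y) x
     + lam * ip M (Q y) (P1 y) + lam * ip M (Q x) (P2 x)"

lemma lagrangian_expansion:
  assumes P1: "reversible_contraction M \<xi> P1" and P2: "reversible_contraction M \<xi> P2"
    and L: "L2 M Y" "L2 M X" "L2 M e1" "L2 M e2" "L2 M dy" "L2 M dx" "L2 M u"
    and Qu: "\<And>v. L2 M v \<Longrightarrow> ip M (Q v) u = ip M v u"
    and E1: "\<And>v. L2 M v \<Longrightarrow> ip M v X - lam * ip M v (P1 Y) = ip M v u + ip M v e1"
    and E2: "\<And>v. L2 M v \<Longrightarrow> ip M v Y - lam * ip M v (P2 X) = ip M v u + ip M v e2"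
  shows "ip M u X + ip M u Y =
      lagrangian P1 P2 u lam (\<lambda>x. Y x + dy x) (\<lambda>x. X x + dx x) - lagrangian P1 P2 (\<lambda>_. 0) lam dy dx
      + ip M (Q Y) e1 + 2 * ip M (Q dy) e1 + ip M (Q X) e2 + 2 * ip M (Q dx) e2"
proof -
  note LQ = L2_Q[OF L(1)] L2_Q[OF L(2)] L2_Q[OF L(5)] L2_Q[OF L(6)]
  have Q_add: "Q (\<lambda>x. f x + g x) = (\<lambda>x. Q f x + Q g x)" for f g
    by (simp add: precomp_def[abs_def])
  have P_add: "ip M w (P (\<lambda>x. f x + g x)) = ip M w (P f) + ip M w (P g)"
    if "reversible_contraction M \<xi> P" "L2 M f" "L2 M g" "L2 M w" for P f g w
    using ip_adjoint_add[OF adjoint_on_rev_contraction[OF that(1)] that(2-4)]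
    by (simp add: ip_commute[of M w])
  have "ip M u (\<lambda>x. Y x + dy x) = ip M u Y + ip M u dy"
    and "ip M u (\<lambda>x. X x + dx x) = ip M u X + ip M u dx"
    and "ip M (Q (\<lambda>x. Y x + dy x)) (\<lambda>x. X x + dx x) =
      ip M (Q Y) X + ip M (Q Y) dx + ip M (Q dy) X + ip M (Q dy) dx"
    and "ip M (Q (\<lambda>x. Y x + dy x)) (P1 (\<lambda>x. Y x + dy x)) =
      ip M (Q Y) (P1 Y) + ip M (Q Y) (P1 dy) + ip M (Q dy) (P1 Y) + ip M (Q dy) (P1 dy)"
    and "ip M (Q (\<lambda>x. X x + dx x)) (P2 (\<lambda>x. X x + dx x)) =
      ip M (Q X) (P2 X) + ip M (Q X) (P2 dx) + ip M (Q dx) (P2 X) + ip M (Q dx) (P2 dx)"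
    using L LQ L2_rev_contraction[OF P1] L2_rev_contraction[OF P2]
    by (simp_all add: ip_add_left ip_add_right L2_add Q_add P_add[OF P1] P_add[OF P2])
  moreover have "ip M (Q Y) (P1 dy) = ip M (Q dy) (P1 Y)" "ip M (Q X) (P2 dx) = ip M (Q dx) (P2 X)"
    using ip_Q_rev_contraction_commute[OF P1 L(1,5)] ip_Q_rev_contraction_commute[OF P2 L(2,6)] .
  moreover have "ip M (Q Y) dx = ip M (Q dx) Y" "ip M (Q Y) X = ip M (Q X) Y"
    using ip_Q_swap[OF L(1,6)] ip_Q_swap[OF L(1,2)] by (simp_all add: ip_commute)
  moreover have "ip M (Q v) u = ip M u v" if "L2 M v" for v
    using Qu[OF that] by (simp add: ip_commute)
  ultimately show ?thesis
    using E1[OF LQ(1)] E1[OF LQ(3)] E2[OF LQ(2)] E2[OF LQ(4)] L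
    by (simp add: lagrangian_def ip_def[of _ "\<lambda>_. 0"] algebra_simps)
qed

lemma abs_ip_Q_le: "L2 M w \<Longrightarrow> L2 M e \<Longrightarrow> \<bar>ip M (Q w) e\<bar> \<le> l2norm M w * l2norm M e"
  using ip_Cauchy_Schwarz[of M "Q w" e] by (simp add: L2_Q l2norm_Q)

lemma abs_lam_ip_Q_rev_contraction_le:
  assumes "reversible_contraction M \<xi> P" "L2 M f" "0 \<le> lam" "lam \<le> 1"
  shows "\<bar>lam * ip M (Q f) (P f)\<bar> \<le> ip M f f"
  using mult_mono[OF assms(4) abs_ip_Q_rev_contraction_le[OF assms(1,2)]] assms(3)
  by (simp add: abs_mult ip_self_nonneg)

lemma lagrangian_quadratic_sign:
  assumes P1: "reversible_contraction M \<xi> P1" and P2: "reversible_contraction M \<xi> P2"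
    and lam: "0 \<le> lam" "lam \<le> 1" and L: "L2 M dy" "L2 M dx"
    and dx: "\<And>x. x \<in> space M \<Longrightarrow> dx x = s * Q dy x" and s: "s = 1 \<or> s = -1"
  shows "s * lagrangian P1 P2 (\<lambda>_. 0) lam dy dx \<le> 0"
proof -
  have "ip M (Q dy) dx = s * ip M dy dy" "ip M dx dx = ip M dy dy"
    using ip_cong[of M "Q dy" "Q dy" dx "\<lambda>x. s * Q dy x"] ip_cong[of M dx "\<lambda>x. s * Q dy x"]
      ip_Q[OF L(1) L(1)] dx s
    by (auto simp: ip_scale_left ip_scale_right)
  then show ?thesis
    using abs_lam_ip_Q_rev_contraction_le[OF P1 L(1) lam] abs_lam_ip_Q_rev_contraction_le[OF P2 L(2) lam] s
    by (auto simp: lagrangian_def ip_def[of _ "\<lambda>_. 0"])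
qed

text \<open>For \<open>s = -1\<close> (convex direction) this bounds the value from above, for \<open>s = 1\<close>
  (concave direction) from below.\<close>

lemma approx_solution_lagrangian_bound:
  assumes P1: "reversible_contraction M \<xi> P1" and P2: "reversible_contraction M \<xi> P2"
    and lam: "0 \<le> lam" "lam \<le> 1" and u: "L2 M u" and Qu: "\<And>v. L2 M v \<Longrightarrow> ip M (Q v) u = ip M v u"
    and sol: "approx_solution M P1 P2 u lam eps X Y" and C: "l2norm M X \<le> C" "l2norm M Y \<le> C"
    and d: "L2 M dy" "L2 M dx" "l2norm M dy \<le> D"
    and dx: "\<And>x. x \<in> space M \<Longrightarrow> dx x = s * Q dy x" and s: "s = 1 \<or> s = -1"
  shows "s * lagrangian P1 P2 u lam (\<lambda>x. Y x + dy x) (\<lambda>x. X x + dx x)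
      \<le> s * (ip M u X + ip M u Y) + 2 * (C + 2 * D) * eps"
proof -
  obtain e1 e2 where L: "L2 M X" "L2 M Y" "L2 M e1" "L2 M e2" and e: "l2norm M e1 \<le> eps" "l2norm M e2 \<le> eps"
    and E1: "\<And>v. L2 M v \<Longrightarrow> ip M v X - lam * ip M v (P1 Y) = ip M v u + ip M v e1"
    and E2: "\<And>v. L2 M v \<Longrightarrow> ip M v Y - lam * ip M v (P2 X) = ip M v u + ip M v e2"
    using sol unfolding approx_solution_def by blast
  have "l2norm M dx = l2norm M dy"
    using ip_cong[of M dx "\<lambda>x. s * Q dy x" dx "\<lambda>x. s * Q dy x"] ip_Q[OF d(1) d(1)] dx s
    by (auto simp: l2norm_def ip_scale_left ip_scale_right)
  with d have dx_norm: "l2norm M dx \<le> D" by simp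
  have err: "\<bar>ip M (Q w) e\<bar> \<le> B * eps"
    if "L2 M w" "L2 M e" "l2norm M w \<le> B" "l2norm M e \<le> eps" for w e B
  proof -
    have "0 \<le> B" using that(3) l2norm_nonneg[of M w] by linarith
    then show ?thesis
      using abs_ip_Q_le[OF that(1,2)] mult_mono[OF that(3,4)] l2norm_nonneg[of M e] by linarith
  qed
  have "ip M u X + ip M u Y =
      lagrangian P1 P2 u lam (\<lambda>x. Y x + dy x) (\<lambda>x. X x + dx x) - lagrangian P1 P2 (\<lambda>_. 0) lam dy dx
      + ip M (Q Y) e1 + 2 * ip M (Q dy) e1 + ip M (Q X) e2 + 2 * ip M (Q dx) e2"
    by (rule lagrangian_expansion[OF P1 P2 L(2,1,3,4) d(1,2) u Qu E1 E2])
  moreover have "s * lagrangian P1 P2 (\<lambda>_. 0) lam dy dx \<le> 0"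
    by (rule lagrangian_quadratic_sign[OF P1 P2 lam d(1,2) dx s])
  moreover note err[OF L(2,3) C(2) e(1)] err[OF d(1) L(3) d(3) e(1)]
    err[OF L(1,4) C(1) e(2)] err[OF d(2) L(4) dx_norm e(2)]
  moreover have "2 * (C + 2 * D) * eps = 2 * (C * eps) + 4 * (D * eps)"
    by (simp add: algebra_simps)
  ultimately show ?thesis
    using s unfolding abs_le_iff by (elim disjE) simp_all
qed

text \<open>Any two points can be joined by a move along \<open>(d, - Q d)\<close> followed by the reverse of a
  move along \<open>(d', Q d')\<close>.\<close>

lemma saddle_meeting_point:
  assumes L: "L2 M Xa" "L2 M Ya" "L2 M Xb" "L2 M Yb"
    and C: "l2norm M Xa \<le> C" "l2norm M Ya \<le> C" "l2norm M Xb \<le> C" "l2norm M Yb \<le> C"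
  obtains da da' db db' where "L2 M da" "L2 M da'" "L2 M db" "L2 M db'"
    "l2norm M da \<le> 2 * C" "l2norm M db \<le> 4 * C"
    "\<And>z. z \<in> space M \<Longrightarrow> da' z = -1 * Q da z" "\<And>z. z \<in> space M \<Longrightarrow> db' z = 1 * Q db z"
    "(\<lambda>z. Ya z + da z) = (\<lambda>z. Yb z + db z)" "(\<lambda>z. Xa z + da' z) = (\<lambda>z. Xb z + db' z)"
proof
  define da where "da = (\<lambda>z. (1 / 2) * ((Yb z - Ya z) - (Q Xb z - Q Xa z)))"
  show da: "L2 M da"
    unfolding da_def using L by (intro L2_scale L2_diff L2_Q)
  show da': "L2 M (\<lambda>z. - Q da z)"
    by (rule L2_uminus[OF L2_Q[OF da]])
  show "L2 M (\<lambda>z. Ya z + da z - Yb z)" "L2 M (\<lambda>z. Xa z - Q da z - Xb z)"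
    using L da L2_Q[OF da] by (simp_all add: L2_add L2_diff)
  have "l2norm M da \<le> (1 / 2) * ((l2norm M Yb + l2norm M Ya) + (l2norm M (Q Xb) + l2norm M (Q Xa)))"
    unfolding da_def l2norm_scale using L
    by (auto intro!: order_trans[OF l2norm_diff] add_mono l2norm_diff L2_diff L2_Q)
  then show nda: "l2norm M da \<le> 2 * C"
    using C L by (simp add: l2norm_Q)
  have "l2norm M (\<lambda>z. Ya z + da z - Yb z) \<le> (l2norm M Ya + l2norm M da) + l2norm M Yb"
    using L da by (auto intro!: order_trans[OF l2norm_diff] add_mono l2norm_add L2_add)
  then show "l2norm M (\<lambda>z. Ya z + da z - Yb z) \<le> 4 * C"
    using C nda by simp
  show "- Q da z = -1 * Q da z" for z
    by simp
  show "Xa z - Q da z - Xb z = 1 * Q (\<lambda>z. Ya z + da z - Yb z) z" if "z \<in> space M" for z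
    using that xi_inv by (simp add: da_def precomp_def algebra_simps)
qed auto

lemma approx_solution_value_mono:
  assumes P1: "reversible_contraction M \<xi> P1"
    and Pa: "reversible_contraction M \<xi> Pa" and Pb: "reversible_contraction M \<xi> Pb"
    and le: "\<And>x. L2 M x \<Longrightarrow> ip M (Q x) (Pa x) \<le> ip M (Q x) (Pb x)"
    and lam: "0 \<le> lam" "lam \<le> 1" and u: "L2 M u" and Qu: "\<And>v. L2 M v \<Longrightarrow> ip M (Q v) u = ip M v u"
    and a: "approx_solution M P1 Pa u lam eps Xa Ya" and b: "approx_solution M P1 Pb u lam eps Xb Yb"
    and C: "l2norm M Xa \<le> C" "l2norm M Ya \<le> C" "l2norm M Xb \<le> C" "l2norm M Yb \<le> C"
  shows "ip M u Xa + ip M u Ya \<le> ip M u Xb + ip M u Yb + 28 * C * eps"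
proof -
  have "L2 M Xa" "L2 M Ya" "L2 M Xb" "L2 M Yb"
    using a b by (simp_all add: approx_solution_def)
  then obtain da da' db db' where L: "L2 M da" "L2 M da'" "L2 M db" "L2 M db'"
    and norms: "l2norm M da \<le> 2 * C" "l2norm M db \<le> 4 * C"
    and moves: "\<And>z. z \<in> space M \<Longrightarrow> da' z = -1 * Q da z" "\<And>z. z \<in> space M \<Longrightarrow> db' z = 1 * Q db z"
    and y: "(\<lambda>z. Ya z + da z) = (\<lambda>z. Yb z + db z)" and x: "(\<lambda>z. Xa z + da' z) = (\<lambda>z. Xb z + db' z)"
    by (rule saddle_meeting_point[OF _ _ _ _ C]) blast+
  have "ip M u Xa + ip M u Ya
      \<le> lagrangian P1 Pa u lam (\<lambda>z. Ya z + da z) (\<lambda>z. Xa z + da' z) + 2 * (C + 2 * (2 * C)) * eps"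
    using approx_solution_lagrangian_bound[OF P1 Pa lam u Qu a C(1,2) L(1,2) norms(1) moves(1)] by simp
  also have "\<dots> \<le> lagrangian P1 Pb u lam (\<lambda>z. Ya z + da z) (\<lambda>z. Xa z + da' z) + 2 * (C + 2 * (2 * C)) * eps"
    using le[of "\<lambda>z. Xa z + da' z"] lam \<open>L2 M Xa\<close> L(2)
    unfolding lagrangian_def by (simp add: L2_add mult_left_mono)
  also have "lagrangian P1 Pb u lam (\<lambda>z. Ya z + da z) (\<lambda>z. Xa z + da' z)
      \<le> ip M u Xb + ip M u Yb + 2 * (C + 2 * (4 * C)) * eps"
    using approx_solution_lagrangian_bound[OF P1 Pb lam u Qu b C(3,4) L(3,4) norms(2) moves(2)]
    by (simp add: x y)
  finally show ?thesis by (simp add: algebra_simps)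
qed

end

definition partial_resolvent ::
  "(('a \<Rightarrow> real) \<Rightarrow> 'a \<Rightarrow> real) \<Rightarrow> (('a \<Rightarrow> real) \<Rightarrow> 'a \<Rightarrow> real) \<Rightarrow> ('a \<Rightarrow> real) \<Rightarrow> real \<Rightarrow> nat \<Rightarrow> 'a \<Rightarrow> real"
where
  "partial_resolvent P1 P2 u lam N x = (\<Sum>n<N. lam ^ n * alternating P1 P2 u n x)"

context measure_preserving_involution
begin

context
  fixes P1 P2 u and lam :: real
  assumes P1: "reversible_contraction M \<xi> P1" and P2: "reversible_contraction M \<xi> P2"
    and u: "L2 M u" and lam: "0 \<le> lam" "lam < 1"
begin

lemma L2_partial_resolvent: "L2 M (partial_resolvent P1 P2 u lam N)"
  unfolding partial_resolvent_def[abs_def] using L2_alternating[OF P1 P2 u]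
  by (intro L2_sum L2_scale) auto

lemma l2norm_partial_resolvent: "l2norm M (partial_resolvent P1 P2 u lam N) \<le> l2norm M u / (1 - lam)"
proof -
  have "l2norm M (partial_resolvent P1 P2 u lam N) \<le> (\<Sum>n<N. l2norm M (\<lambda>x. lam ^ n * alternating P1 P2 u n x))"
    unfolding partial_resolvent_def[abs_def] using L2_alternating[OF P1 P2 u]
    by (intro l2norm_sum L2_scale) auto
  also have "\<dots> \<le> (\<Sum>n<N. lam ^ n) * l2norm M u"
    unfolding sum_distrib_right l2norm_scale using l2norm_alternating[OF P1 P2 u] lam
    by (intro sum_mono) (simp add: mult_left_mono)
  also have "(\<Sum>n<N. lam ^ n) = (1 - lam ^ N) / (1 - lam)"
    using lam by (simp add: sum_gp_strict)
  also have "\<dots> * l2norm M u \<le> 1 / (1 - lam) * l2norm M u"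
    using lam l2norm_nonneg[of M u] by (intro mult_right_mono divide_right_mono) auto
  finally show ?thesis by simp
qed

lemma partial_resolvent_equation:
  assumes v: "L2 M v"
  shows "ip M v (partial_resolvent P1 P2 u lam N) - lam * ip M v (P1 (partial_resolvent P2 P1 u lam N))
    = ip M v u + ip M v (\<lambda>x. - (lam ^ N * alternating P1 P2 u N x))"
proof -
  let ?f = "\<lambda>n. lam ^ n * ip M v (alternating P1 P2 u n)"
  have shifted: "lam * ip M v (P1 (partial_resolvent P2 P1 u lam N)) = (\<Sum>n<N. ?f (Suc n))"
    unfolding partial_resolvent_def[abs_def] ip_commute[of M v]
    using L2_alternating[OF P1 P2 u] v
    by (simp add: ip_adjoint_sum[OF adjoint_on_rev_contraction[OF P1]] L2_scale
        ip_adjoint_scale[OF adjoint_on_rev_contraction[OF P1]] sum_distrib_left ip_commute[of M v]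
        mult.assoc)
  have unshifted: "ip M v (partial_resolvent P1 P2 u lam N) = (\<Sum>n<N. ?f n)"
    unfolding partial_resolvent_def[abs_def] using L2_alternating[OF P1 P2 u] v
    by (simp add: ip_sum_right L2_scale ip_scale_right)
  have "ip M v (partial_resolvent P1 P2 u lam N) - lam * ip M v (P1 (partial_resolvent P2 P1 u lam N))
      = (\<Sum>n<N. ?f n - ?f (Suc n))"
    unfolding shifted unshifted sum_subtractf ..
  also have "\<dots> = ?f 0 - ?f N"
    by (rule sum_lessThan_telescope')
  finally show ?thesis
    by (simp add: ip_uminus_right ip_scale_right)
qed

end

lemma approx_solution_partial_resolvent:
  assumes P1: "reversible_contraction M \<xi> P1" and P2: "reversible_contraction M \<xi> P2"
    and u: "L2 M u" and lam: "0 \<le> lam" "lam < 1"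
  shows "approx_solution M P1 P2 u lam (lam ^ N * l2norm M u)
     (partial_resolvent P1 P2 u lam N) (partial_resolvent P2 P1 u lam N)"
proof -
  have e: "L2 M (\<lambda>x. - (lam ^ N * alternating Pa Pb u N x))
      \<and> l2norm M (\<lambda>x. - (lam ^ N * alternating Pa Pb u N x)) \<le> lam ^ N * l2norm M u"
    if "reversible_contraction M \<xi> Pa" "reversible_contraction M \<xi> Pb" for Pa Pb
    using L2_alternating[OF that u, of N] l2norm_alternating[OF that u, of N] lam
    by (simp add: L2_uminus L2_scale l2norm_uminus l2norm_scale mult_left_mono)
  show ?thesis
    unfolding approx_solution_def
    using L2_partial_resolvent[OF P1 P2 u lam] L2_partial_resolvent[OF P2 P1 u lam]
      partial_resolvent_equation[OF P1 P2 u lam] partial_resolvent_equation[OF P2 P1 u lam]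
      e[OF P1 P2] e[OF P2 P1]
    by blast
qed

lemma ip_partial_resolvent:
  assumes P1: "reversible_contraction M \<xi> P1" and P2: "reversible_contraction M \<xi> P2" and u: "L2 M u"
  shows "ip M u (partial_resolvent P1 P2 u lam N) + ip M u (partial_resolvent P2 P1 u lam N)
    = (\<Sum>n<N. lam ^ n * (ip M u (alternating P1 P2 u n) + ip M u (alternating P2 P1 u n)))"
  unfolding partial_resolvent_def[abs_def] using L2_alternating[OF P1 P2 u] u
  by (simp add: ip_sum_right L2_scale ip_scale_right sum.distrib distrib_left)

lemma alternating_series_mono:
  assumes P1: "reversible_contraction M \<xi> P1"
    and Pa: "reversible_contraction M \<xi> Pa" and Pb: "reversible_contraction M \<xi> Pb"
    and le: "\<And>x. L2 M x \<Longrightarrow> ip M (Q x) (Pa x) \<le> ip M (Q x) (Pb x)"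
    and lam: "0 \<le> lam" "lam < 1" and u: "L2 M u" and Qu: "\<And>v. L2 M v \<Longrightarrow> ip M (Q v) u = ip M v u"
  shows "alternating_series M P1 Pa u lam \<le> alternating_series M P1 Pb u lam"
proof (rule LIMSEQ_le)
  let ?t = "\<lambda>P n. lam ^ n * (ip M u (alternating P1 P u n) + ip M u (alternating P P1 u n))"
  define C where "C = l2norm M u / (1 - lam)"
  show "(\<lambda>N. \<Sum>n<N. ?t Pa n) \<longlonglongrightarrow> alternating_series M P1 Pa u lam"
    unfolding alternating_series_def by (rule summable_LIMSEQ[OF summable_alternating_terms[OF P1 Pa u lam]])
  have "(\<lambda>N. (\<Sum>n<N. ?t Pb n) + 28 * C * (lam ^ N * l2norm M u))
      \<longlonglongrightarrow> alternating_series M P1 Pb u lam + 28 * C * (0 * l2norm M u)"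
    unfolding alternating_series_def using lam
    by (intro tendsto_intros summable_LIMSEQ[OF summable_alternating_terms[OF P1 Pb u lam]]
        LIMSEQ_power_zero) auto
  then show "(\<lambda>N. (\<Sum>n<N. ?t Pb n) + 28 * C * (lam ^ N * l2norm M u))
      \<longlonglongrightarrow> alternating_series M P1 Pb u lam"
    by simp
  have "(\<Sum>n<N. ?t Pa n) \<le> (\<Sum>n<N. ?t Pb n) + 28 * C * (lam ^ N * l2norm M u)" for N
    using approx_solution_value_mono[OF P1 Pa Pb le lam(1) less_imp_le[OF lam(2)] u Qu
        approx_solution_partial_resolvent[OF P1 Pa u lam] approx_solution_partial_resolvent[OF P1 Pb u lam]]
      l2norm_partial_resolvent[OF P1 Pa u lam, folded C_def] l2norm_partial_resolvent[OF Pa P1 u lam, folded C_def]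
      l2norm_partial_resolvent[OF P1 Pb u lam, folded C_def] l2norm_partial_resolvent[OF Pb P1 u lam, folded C_def]
    by (simp add: ip_partial_resolvent[OF P1 Pa u] ip_partial_resolvent[OF P1 Pb u])
  then show "\<exists>N. \<forall>n\<ge>N. (\<Sum>n<n. ?t Pa n) \<le> (\<Sum>n<n. ?t Pb n) + 28 * C * (lam ^ n * l2norm M u)"
    by blast
qed

lemma ip_Q_left_invariant:
  assumes "L2 M g" "AE x in M. g (\<xi> x) = g x" "L2 M v"
  shows "ip M (Q v) g = ip M v g"
proof -
  have "(\<lambda>x. g (\<xi> x)) \<in> borel_measurable M"
    using L2_Q[OF assms(1)] by (simp add: L2_def precomp_def[abs_def])
  then have "ip M v (Q g) = ip M v g"
    unfolding ip_def using assms
    by (intro integral_cong_AE) (auto simp: precomp_def L2_def borel_measurable_times)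
  with assms show ?thesis by (simp add: ip_Q_swap)
qed

lemma var_lam_mono:
  assumes "finite_measure M" and P1: "reversible_contraction M \<xi> P1"
    and Pa: "reversible_contraction M \<xi> Pa" and Pb: "reversible_contraction M \<xi> Pb"
    and le: "\<And>x. L2 M x \<Longrightarrow> ip M (Q x) (Pa x) \<le> ip M (Q x) (Pb x)"
    and f: "L2 M f" "AE x in M. f (\<xi> x) = f x" and lam: "0 \<le> lam" "lam < 1"
  shows "var_lam M lam f P1 Pa \<le> var_lam M lam f P1 Pb"
proof -
  define u where "u x = f x - (\<integral>y. f y \<partial>M)" for x
  have u: "L2 M u"
    unfolding u_def using f(1) L2_const[OF assms(1)] by (rule L2_diff)
  have "AE x in M. u (\<xi> x) = u x"
    using f(2) by eventually_elim (simp add: u_def)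
  then have "alternating_series M P1 Pa u lam \<le> alternating_series M P1 Pb u lam"
    using ip_Q_left_invariant[OF u] by (intro alternating_series_mono[OF P1 Pa Pb le lam u])
  then show ?thesis
    unfolding var_lam_def Let_def u_def[symmetric]
    by (simp add: alternating_series_regroup[OF P1 Pa u lam] alternating_series_regroup[OF P1 Pb u lam])
qed

end

section \<open>The Markov kernel operator\<close>

lemma square_integral_le_nn_integral_square:
  fixes f :: "'a \<Rightarrow> real"
  assumes N: "prob_space N" and f: "f \<in> borel_measurable N"
  shows "ennreal ((\<integral>y. f y \<partial>N)\<^sup>2) \<le> (\<integral>\<^sup>+y. ennreal ((f y)\<^sup>2) \<partial>N)"
proof (cases "integrable N (\<lambda>y. (f y)\<^sup>2)")
  case True
  interpret prob_space N by (rule N)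
  have "integrable N f" by (rule square_integrable_imp_integrable[OF f True])
  then have "(\<integral>y. f y \<partial>N)\<^sup>2 \<le> (\<integral>y. (f y)\<^sup>2 \<partial>N)"
    using variance_positive[of f] variance_eq[of f] True by simp
  with True show ?thesis by (simp add: nn_integral_eq_integral)
next
  case False
  then have "(\<integral>\<^sup>+y. ennreal ((f y)\<^sup>2) \<partial>N) = \<infinity>"
    using f top.not_eq_extremum by (fastforce simp: integrable_iff_bounded)
  then show ?thesis by simp
qed

lemma L2_contraction_of_nn_integral_le:
  assumes f: "L2 M f" and g: "g \<in> borel_measurable M"
    and le: "(\<integral>\<^sup>+x. ennreal ((g x)\<^sup>2) \<partial>M) \<le> (\<integral>\<^sup>+x. ennreal ((f x)\<^sup>2) \<partial>M)"
  shows "L2 M g \<and> ip M g g \<le> ip M f f"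
proof -
  have f_eq: "(\<integral>\<^sup>+x. ennreal ((f x)\<^sup>2) \<partial>M) = ennreal (ip M f f)"
    using f by (simp add: L2_def ip_def nn_integral_eq_integral power2_eq_square)
  then have "(\<integral>\<^sup>+x. ennreal ((g x)\<^sup>2) \<partial>M) < \<infinity>"
    using le by (simp add: le_less_trans)
  then have "integrable M (\<lambda>x. (g x)\<^sup>2)"
    using g by (intro integrableI_bounded) auto
  moreover have "ennreal (ip M g g) \<le> ennreal (ip M f f)"
    using calculation le f_eq by (simp add: ip_def nn_integral_eq_integral power2_eq_square)
  ultimately show ?thesis
    using g ip_self_nonneg[of M f] by (simp add: L2_def ennreal_le_iff)
qed

context measure_preserving_involution
begin

context
  fixes K :: "'a \<Rightarrow> 'a measure"
  assumes prob: "prob_space M" and K: "K \<in> M \<rightarrow>\<^sub>M prob_algebra M"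
    and K_rev: "reversible M \<xi> (kop K)"
begin

lemma prob_space_K: "z \<in> space M \<Longrightarrow> prob_space (K z) \<and> sets (K z) = sets M"
  using measurable_space[OF K] by (auto simp: space_prob_algebra)

lemma kop_measurable: "f \<in> borel_measurable M \<Longrightarrow> kop K f \<in> borel_measurable M"
  unfolding kop_def[abs_def]
  using measurable_compose[OF measurable_prob_algebraD[OF K] integral_measurable_subprob_algebra[of f M]]
  by (simp add: comp_def)

lemma kop_indicator: "A \<in> sets M \<Longrightarrow> z \<in> space M \<Longrightarrow> kop K (indicator A) z = measure (K z) A"
  using prob_space_K[of z] by (simp add: kop_def)

text \<open>Reversibility, tested against the constant \<open>1\<close>, makes \<open>M\<close> stationary for \<open>K\<close>.\<close>

lemma bind_kernel_eq: "M \<bind> K = M"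
proof (rule measure_eqI)
  have M: "M \<in> space (prob_algebra M)" using prob by (simp add: space_prob_algebra)
  show sets: "sets (M \<bind> K) = sets M" by (rule sets_bind'[OF M K])
  fix A assume "A \<in> sets (M \<bind> K)"
  with sets have A: "A \<in> sets M" by simp
  have fin: "finite_measure M" using prob by (rule prob_space.finite_measure)
  have "L2 M (indicator A :: 'a \<Rightarrow> real)"
    using A fin by (auto simp: L2_def indicator_def intro!: finite_measure.integrable_const_bound[where B = 1])
  then have "ip M (kop K (indicator A)) (\<lambda>_. 1) = ip M (indicator A) (\<lambda>z. kop K (\<lambda>_. 1) (\<xi> z))"
    using K_rev L2_const[OF fin] unfolding reversible_def by auto
  also have "\<dots> = measure M A"
    using A prob_space_K measurable_space[OF xi_meas]
    by (simp add: ip_def kop_def prob_space.prob_space cong: Bochner_Integration.integral_cong)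
  finally have "(\<integral>z. measure (K z) A \<partial>M) = measure M A"
    using A by (simp add: ip_def kop_indicator cong: Bochner_Integration.integral_cong)
  moreover have "integrable M (\<lambda>z. measure (K z) A)"
    using A prob_space_K measurable_compose[OF measurable_prob_algebraD[OF K] measurable_measure_subprob_algebra[OF A]]
    by (intro finite_measure.integrable_const_bound[OF fin, where B = 1])
       (auto simp: comp_def prob_space.prob_le_1)
  ultimately have "(\<integral>\<^sup>+z. ennreal (measure (K z) A) \<partial>M) = emeasure M A"
    using prob by (simp add: nn_integral_eq_integral finite_measure.emeasure_eq_measure[OF fin])
  moreover have "(\<integral>\<^sup>+z. emeasure (K z) A \<partial>M) = (\<integral>\<^sup>+z. ennreal (measure (K z) A) \<partial>M)"
    by (intro nn_integral_cong)
       (metis prob_space_K finite_measure.emeasure_eq_measure prob_space.finite_measure)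
  ultimately show "emeasure (M \<bind> K) A = emeasure M A"
    using A by (simp add: emeasure_bind_prob_algebra[OF M K])
qed

lemma kop_reversible_contraction: "reversible_contraction M \<xi> (kop K)"
  unfolding reversible_contraction_def
proof (intro conjI[OF K_rev] allI impI)
  fix f assume f: "L2 M f"
  then have fm: "f \<in> borel_measurable M" by (rule L2_measurable)
  have "(\<integral>\<^sup>+z. ennreal ((kop K f z)\<^sup>2) \<partial>M) \<le> (\<integral>\<^sup>+z. (\<integral>\<^sup>+y. ennreal ((f y)\<^sup>2) \<partial>K z) \<partial>M)"
    using prob_space_K fm unfolding kop_def
    by (intro nn_integral_mono square_integral_le_nn_integral_square) (auto cong: measurable_cong_sets)
  also have "\<dots> = (\<integral>\<^sup>+y. ennreal ((f y)\<^sup>2) \<partial>(M \<bind> K))"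
    using fm by (intro nn_integral_bind[symmetric, OF _ measurable_prob_algebraD[OF K]]) auto
  finally show "L2 M (kop K f) \<and> ip M (kop K f) (kop K f) \<le> ip M f f"
    using f kop_measurable[OF fm] by (intro L2_contraction_of_nn_integral_le) (simp_all add: bind_kernel_eq)
qed

end

end

section \<open>The deterministic proposal operator\<close>

definition enn_ratio :: "ennreal \<Rightarrow> ennreal \<Rightarrow> real" where
  "enn_ratio a b = (if 0 < a \<and> a < \<infinity> \<and> 0 < b \<and> b < \<infinity> then enn2real b / enn2real a else 0)"

lemma enn_ratio_nonneg: "0 \<le> enn_ratio a b"
  by (simp add: enn_ratio_def)

lemma enn_ratio_balance:
  assumes "admissible \<phi>"
  shows "a * ennreal (\<phi> (enn_ratio a b)) = b * ennreal (\<phi> (enn_ratio b a))"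
proof (cases "0 < a \<and> a < \<infinity> \<and> 0 < b \<and> b < \<infinity>")
  case True
  define x y where "x = enn2real a" and "y = enn2real b"
  have xy: "a = ennreal x" "b = ennreal y" "0 < x" "0 < y"
    using True by (auto simp: x_def y_def enn2real_positive_iff ennreal_enn2real_if)
  have "y / x * \<phi> (1 / (y / x)) = \<phi> (y / x)"
    using assms xy(3,4) unfolding admissible_def by (metis divide_pos_pos)
  then have "x * \<phi> (y / x) = y * \<phi> (x / y)"
    using xy(3) by (simp add: field_simps)
  moreover have "0 \<le> \<phi> (y / x)" "0 \<le> \<phi> (x / y)"
    using assms xy(3,4) by (simp_all add: admissible_def)
  ultimately show ?thesis
    using True xy by (simp add: enn_ratio_def x_def[symmetric] y_def[symmetric] ennreal_mult[symmetric])
next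
  case False
  then show ?thesis
    using assms by (auto simp: enn_ratio_def admissible_def)
qed

locale involutive_proposal = measure_preserving_involution M \<xi>
  for M :: "'a measure" and \<xi> +
  fixes \<psi> :: "'a \<Rightarrow> 'a"
  assumes prob: "prob_space M"
    and psi_meas: "\<psi> \<in> measurable M M"
    and psi_bij: "bij_betw \<psi> (space M) (space M)"
    and psi_inv: "\<forall>x\<in>space M. the_inv_into (space M) \<psi> x = \<xi> (\<psi> (\<xi> x))"
begin

abbreviation "\<tau> \<equiv> \<xi> \<circ> \<psi>"

lemma tau_meas: "\<tau> \<in> measurable M M"
  using measurable_comp[OF psi_meas xi_meas] .

lemma psi_xi_psi: "z \<in> space M \<Longrightarrow> \<psi> (\<xi> (\<psi> z)) = \<xi> z"
  using psi_inv f_the_inv_into_f[of \<psi> "space M" "\<xi> z"] psi_bij xi_inv measurable_space[OF xi_meas]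
  by (auto simp: bij_betw_def)

lemma tau_tau: "z \<in> space M \<Longrightarrow> \<tau> (\<tau> z) = z"
  using psi_xi_psi xi_inv by simp

definition "M_tau = distr M M \<tau>"
definition "nu = measure_add M M_tau"

lemma sets_M_tau[simp]: "sets M_tau = sets M" and space_M_tau[simp]: "space M_tau = space M"
  by (simp_all add: M_tau_def)

lemma sets_nu[simp]: "sets nu = sets M" and space_nu[simp]: "space nu = space M"
  by (simp_all add: nu_def measure_add_def)

lemma measurable_nu[simp]: "measurable nu = measurable M" "measurable N nu = measurable N M"
  by (auto intro!: ext simp: measurable_def)

lemma emeasure_nu: "S \<in> sets M \<Longrightarrow> emeasure nu S = emeasure M S + emeasure M_tau S"
  unfolding nu_def measure_add_def
proof (rule emeasure_measure_of_sigma[OF sets.sigma_algebra_axioms])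
  show "countably_additive (sets M) (\<lambda>S. emeasure M S + emeasure M_tau S)"
    unfolding countably_additive_def
  proof (intro allI impI)
    fix F :: "nat \<Rightarrow> 'a set" assume F: "range F \<subseteq> sets M" "disjoint_family F"
    then show "(\<Sum>i. emeasure M (F i) + emeasure M_tau (F i)) = emeasure M (\<Union>(range F)) + emeasure M_tau (\<Union>(range F))"
      by (simp add: suminf_add[symmetric] suminf_emeasure)
  qed
qed (simp add: positive_def)

lemma finite_measure_nu: "finite_measure nu"
proof
  have "\<tau> -` space M \<inter> space M = space M"
    using measurable_space[OF tau_meas] by auto
  then have "emeasure M_tau (space M) = emeasure M (space M)"
    unfolding M_tau_def using tau_meas by (simp add: emeasure_distr)
  then show "emeasure nu (space nu) \<noteq> \<infinity>"
    using prob by (simp add: emeasure_nu prob_space.emeasure_space_1)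
qed

lemma absolutely_continuous_nu: "absolutely_continuous nu M" "absolutely_continuous nu M_tau"
  unfolding absolutely_continuous_def by (auto simp: null_sets_def emeasure_nu)

lemma distr_tau_nu: "distr nu nu \<tau> = nu" "distr M nu \<tau> = M_tau" "distr M_tau nu \<tau> = M"
proof -
  have tau_inv_image: "\<tau> -` (\<tau> -` S \<inter> space M) \<inter> space M = S" if "S \<in> sets M" for S
    using sets.sets_into_space[OF that] tau_tau measurable_space[OF tau_meas] by auto
  have "distr M_tau nu \<tau> = distr M_tau M \<tau>"
    by (rule distr_cong) auto
  also have "\<dots> = distr M M (\<tau> \<circ> \<tau>)"
    unfolding M_tau_def by (rule distr_distr[OF tau_meas tau_meas])
  also have "\<dots> = distr M M (\<lambda>x. x)"
    using tau_tau by (intro distr_cong) auto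
  finally show "distr M_tau nu \<tau> = M"
    by (simp add: distr_id)
  show "distr M nu \<tau> = M_tau"
    unfolding M_tau_def by (rule distr_cong) auto
  show "distr nu nu \<tau> = nu"
  proof (rule measure_eqI)
    fix S assume "S \<in> sets (distr nu nu \<tau>)"
    then have S: "S \<in> sets M" by simp
    have S': "\<tau> -` S \<inter> space M \<in> sets M" using tau_meas S by (rule measurable_sets)
    have "emeasure (distr nu nu \<tau>) S = emeasure nu (\<tau> -` S \<inter> space M)"
      using S tau_meas by (simp add: emeasure_distr)
    also have "\<dots> = emeasure M_tau S + emeasure M (\<tau> -` (\<tau> -` S \<inter> space M) \<inter> space M)"
      using S S' tau_meas by (simp add: emeasure_nu M_tau_def emeasure_distr add.commute)
    also have "\<dots> = emeasure nu S"
      by (simp only: tau_inv_image[OF S] emeasure_nu[OF S] add.commute)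
    finally show "emeasure (distr nu nu \<tau>) S = emeasure nu S" .
  qed simp
qed

abbreviation "dM \<equiv> RN_deriv nu M"
abbreviation "dM_tau \<equiv> RN_deriv nu M_tau"

lemma AE_RN_deriv_tau: "AE x in nu. dM (\<tau> x) = dM_tau x" "AE x in nu. dM_tau (\<tau> x) = dM x"
proof -
  interpret sigma_finite_measure nu
    using finite_measure_nu by (simp add: finite_measure_def)
  have tau: "\<tau> \<in> measurable nu nu" using tau_meas by simp
  have inv: "\<forall>x\<in>space nu. \<tau> (\<tau> x) = x" using tau_tau by simp
  have "AE x in nu. RN_deriv (distr nu nu \<tau>) (distr M_tau nu \<tau>) (\<tau> x) = RN_deriv nu M_tau x"
    by (rule RN_deriv_distr[OF tau tau inv]) (simp_all only: distr_tau_nu absolutely_continuous_nu sets_M_tau sets_nu)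
  then show "AE x in nu. dM (\<tau> x) = dM_tau x" by (simp only: distr_tau_nu)
  have "AE x in nu. RN_deriv (distr nu nu \<tau>) (distr M nu \<tau>) (\<tau> x) = RN_deriv nu M x"
    by (rule RN_deriv_distr[OF tau tau inv]) (simp_all only: distr_tau_nu absolutely_continuous_nu sets_M_tau sets_nu)
  then show "AE x in nu. dM_tau (\<tau> x) = dM x" by (simp only: distr_tau_nu)
qed

lemma density_RN_deriv_nu: "density nu dM = M"
proof -
  interpret sigma_finite_measure nu
    using finite_measure_nu by (simp add: finite_measure_def)
  show ?thesis by (rule density_RN_deriv[OF absolutely_continuous_nu(1)]) simp
qed

lemma ratio_eq: "ratio M \<xi> \<psi> z = enn_ratio (dM z) (dM_tau z)"
  unfolding ratio_def enn_ratio_def Let_def M_tau_def nu_def by simp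

end

context involutive_proposal
begin

definition accept :: "(real \<Rightarrow> real) \<Rightarrow> 'a \<Rightarrow> real" where
  "accept \<phi> z = \<phi> (ratio M \<xi> \<psi> z)"

definition accepted_flow :: "(real \<Rightarrow> real) \<Rightarrow> 'a measure" where
  "accepted_flow \<phi> = density M (\<lambda>z. ennreal (accept \<phi> z))"

context
  fixes \<phi> assumes \<phi>: "admissible \<phi>"
begin

lemma accept_measurable[measurable]: "accept \<phi> \<in> borel_measurable M"
proof -
  have [measurable]: "dM \<in> borel_measurable M" "dM_tau \<in> borel_measurable M" "\<phi> \<in> borel_measurable borel"
    using borel_measurable_RN_deriv[of nu M] borel_measurable_RN_deriv[of nu M_tau] \<phi>
    by (simp_all add: admissible_def)
  show ?thesis
    unfolding accept_def[abs_def] ratio_eq enn_ratio_def by measurable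
qed

lemma accept_nonneg: "0 \<le> accept \<phi> z" and accept_le_1: "accept \<phi> z \<le> 1"
  using \<phi> ratio_eq[of z] enn_ratio_nonneg by (simp_all add: accept_def admissible_def)

lemma sets_accepted_flow[simp]: "sets (accepted_flow \<phi>) = sets M"
  and space_accepted_flow[simp]: "space (accepted_flow \<phi>) = space M"
  by (simp_all add: accepted_flow_def)

lemma measurable_accepted_flow[simp]:
  "measurable (accepted_flow \<phi>) = measurable M" "measurable N (accepted_flow \<phi>) = measurable N M"
  by (auto intro!: ext simp: measurable_def)

text \<open>The detailed-balance identity \<open>r \<phi>(1/r) = \<phi>(r)\<close> makes the density \<open>dM \<cdot> accept \<phi>\<close>
  of the flow with respect to the \<open>\<tau>\<close>-invariant measure \<open>nu\<close> itself \<open>\<tau>\<close>-invariant.\<close>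

lemma distr_accepted_flow_tau: "distr (accepted_flow \<phi>) M \<tau> = accepted_flow \<phi>"
proof -
  define g where "g z = dM z * ennreal (accept \<phi> z)" for z
  have [measurable]: "dM \<in> borel_measurable M"
    using borel_measurable_RN_deriv[of nu M] by simp
  have g: "g \<in> borel_measurable M"
    unfolding g_def[abs_def] by measurable
  then have g_meas: "g \<in> borel_measurable nu" "(\<lambda>z. g (\<tau> z)) \<in> borel_measurable nu"
    using measurable_compose[OF tau_meas g] by (simp_all add: comp_def)
  have "AE z in nu. g (\<tau> z) = g z"
    using AE_RN_deriv_tau
  proof eventually_elim
    case (elim z)
    then show ?case
      using enn_ratio_balance[OF \<phi>, of "dM_tau z" "dM z"]
      by (simp add: g_def accept_def ratio_eq)
  qed
  then have "density nu (\<lambda>z. g (\<tau> z)) = density nu g"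
    using g_meas by (intro density_cong) auto
  moreover have "accepted_flow \<phi> = density (density nu dM) (\<lambda>z. ennreal (accept \<phi> z))"
    unfolding accepted_flow_def by (simp only: density_RN_deriv_nu)
  then have "accepted_flow \<phi> = density nu g"
    unfolding g_def using borel_measurable_RN_deriv[of nu M] by (simp add: density_density_eq)
  moreover have "distr (density nu (\<lambda>z. g (\<tau> z))) nu \<tau> = density (distr nu nu \<tau>) g"
    using g_meas tau_meas by (intro density_distr[symmetric]) (auto simp: comp_def)
  moreover have "distr (density nu g) M \<tau> = distr (density nu g) nu \<tau>"
    by (rule distr_cong) auto
  ultimately show ?thesis
    by (simp only: distr_tau_nu)
qed

lemma integral_accepted_flow_tau_antisym:
  assumes h: "h \<in> borel_measurable M" and anti: "\<And>z. z \<in> space M \<Longrightarrow> h (\<tau> z) = - h z"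
  shows "(\<integral>z. h z \<partial>accepted_flow \<phi>) = (0 :: real)"
proof -
  have tau: "\<tau> \<in> measurable (accepted_flow \<phi>) M"
    using tau_meas by simp
  have "(\<integral>z. h z \<partial>accepted_flow \<phi>) = (\<integral>z. h z \<partial>distr (accepted_flow \<phi>) M \<tau>)"
    by (simp only: distr_accepted_flow_tau)
  also have "\<dots> = (\<integral>z. h (\<tau> z) \<partial>accepted_flow \<phi>)"
    by (rule integral_distr[OF tau h])
  also have "\<dots> = (\<integral>z. - h z \<partial>accepted_flow \<phi>)"
    by (rule Bochner_Integration.integral_cong) (simp_all only: space_accepted_flow anti)
  finally show ?thesis by simp
qed

lemma integral_accepted_flow:
  "g \<in> borel_measurable M \<Longrightarrow> (\<integral>z. g z \<partial>accepted_flow \<phi>) = (\<integral>z. accept \<phi> z * g z \<partial>M)"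
  unfolding accepted_flow_def by (simp add: integral_density accept_nonneg)

lemma integrable_accepted_flow:
  "g \<in> borel_measurable M \<Longrightarrow> integrable (accepted_flow \<phi>) g \<longleftrightarrow> integrable M (\<lambda>z. accept \<phi> z * g z)"
  unfolding accepted_flow_def by (simp add: integrable_density accept_nonneg)

lemma L2_accepted_flow: "L2 M f \<Longrightarrow> L2 (accepted_flow \<phi>) f"
  unfolding L2_def
  by (auto simp: integrable_accepted_flow accept_nonneg accept_le_1 mult_left_le_one_le
      intro!: Bochner_Integration.integrable_bound[of M "\<lambda>z. (f z)\<^sup>2"])

lemma L2_accepted_flow_tau:
  assumes f: "L2 (accepted_flow \<phi>) f"
  shows "L2 (accepted_flow \<phi>) (\<lambda>z. f (\<tau> z))"
proof -
  have fm: "f \<in> borel_measurable M" using f by (simp add: L2_def)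
  have tau: "\<tau> \<in> measurable (accepted_flow \<phi>) M" using tau_meas by simp
  have "integrable (distr (accepted_flow \<phi>) M \<tau>) (\<lambda>z. (f z)\<^sup>2)"
    using f unfolding L2_def by (simp only: distr_accepted_flow_tau)
  then have "integrable (accepted_flow \<phi>) (\<lambda>z. (f (\<tau> z))\<^sup>2)"
    using integrable_distr_eq[OF tau, of "\<lambda>z. (f z)\<^sup>2"] fm by simp
  moreover have "(\<lambda>z. f (\<tau> z)) \<in> borel_measurable M"
    using measurable_compose[OF tau_meas fm] by (simp add: comp_def)
  ultimately show ?thesis by (simp add: L2_def)
qed

lemma L2_accepted_flow_psi:
  assumes "L2 M f"
  shows "L2 (accepted_flow \<phi>) (\<lambda>z. f (\<psi> z))"
proof (rule L2_cong)
  show "L2 (accepted_flow \<phi>) (\<lambda>z. Q f (\<tau> z))"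
    by (rule L2_accepted_flow_tau[OF L2_accepted_flow[OF L2_Q[OF assms]]])
  show "Q f (\<tau> z) = f (\<psi> z)" if "z \<in> space (accepted_flow \<phi>)" for z
    using that xi_inv measurable_space[OF psi_meas] by (simp add: precomp_def)
qed

lemma L2_accepted_flow_xi: "L2 M f \<Longrightarrow> L2 (accepted_flow \<phi>) (\<lambda>z. f (\<xi> z))"
  using L2_accepted_flow[OF L2_Q] by (simp add: precomp_def[abs_def])

lemma P2op_eq: "P2op M \<xi> \<psi> \<phi> f z = f (\<xi> z) + accept \<phi> z * (f (\<psi> z) - f (\<xi> z))"
  by (simp add: P2op_def accept_def algebra_simps)

lemma L2_accepted_flow_jump: "L2 M f \<Longrightarrow> L2 (accepted_flow \<phi>) (\<lambda>z. f (\<psi> z) - f (\<xi> z))"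
  by (intro L2_diff L2_accepted_flow_psi L2_accepted_flow_xi)

lemma integrable_accept_mult:
  assumes "L2 (accepted_flow \<phi>) f" "L2 (accepted_flow \<phi>) g"
  shows "integrable M (\<lambda>z. accept \<phi> z * (f z * g z))"
  using integrable_mult_L2[OF assms] assms
  by (simp add: integrable_accepted_flow L2_def borel_measurable_times)

text \<open>The Dirichlet form of the move.  Its symmetry in \<open>f\<close> and \<open>g\<close> gives reversibility, and
  \<open>\<phi>\<close> enters only through the weight of the accepted flow, which gives monotonicity.\<close>

lemma ip_Q_P2op:
  assumes f: "L2 M f" and g: "L2 M g"
  shows "ip M (Q f) (P2op M \<xi> \<psi> \<phi> g) = ip M f g
    - ip (accepted_flow \<phi>) (\<lambda>z. f (\<psi> z) - f (\<xi> z)) (\<lambda>z. g (\<psi> z) - g (\<xi> z)) / 2"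
proof -
  let ?F = "accepted_flow \<phi>"
  let ?Dg = "\<lambda>z. g (\<psi> z) - g (\<xi> z)"
  have Ff: "L2 ?F (\<lambda>z. f (\<psi> z))" "L2 ?F (\<lambda>z. f (\<xi> z))" and Dg: "L2 ?F ?Dg"
    using f g by (simp_all add: L2_accepted_flow_psi L2_accepted_flow_xi L2_accepted_flow_jump)
  have "ip M (Q f) (P2op M \<xi> \<psi> \<phi> g) = (\<integral>z. f (\<xi> z) * g (\<xi> z) + accept \<phi> z * (f (\<xi> z) * ?Dg z) \<partial>M)"
    unfolding ip_def by (simp add: P2op_eq precomp_def algebra_simps)
  also have "\<dots> = ip M (Q f) (Q g) + ip ?F (\<lambda>z. f (\<xi> z)) ?Dg"
    using integrable_mult_L2[OF L2_Q[OF f] L2_Q[OF g]] integrable_accept_mult[OF Ff(2) Dg] Ff Dg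
    by (simp add: ip_def precomp_def integral_accepted_flow L2_def borel_measurable_times)
  also have "(\<lambda>z. f (\<xi> z)) = (\<lambda>z. (1 / 2) * (f (\<psi> z) + f (\<xi> z)) - (1 / 2) * (f (\<psi> z) - f (\<xi> z)))"
    by (simp add: field_simps)
  also have "ip ?F \<dots> ?Dg = ip ?F (\<lambda>z. f (\<psi> z) + f (\<xi> z)) ?Dg / 2
      - ip ?F (\<lambda>z. f (\<psi> z) - f (\<xi> z)) ?Dg / 2"
    unfolding ip_diff_left[OF L2_scale[OF L2_add[OF Ff]] L2_scale[OF L2_diff[OF Ff]] Dg] ip_scale_left
    by simp
  also have "ip ?F (\<lambda>z. f (\<psi> z) + f (\<xi> z)) ?Dg = 0"
    unfolding ip_def
  proof (rule integral_accepted_flow_tau_antisym)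
    show "(\<lambda>z. (f (\<psi> z) + f (\<xi> z)) * ?Dg z) \<in> borel_measurable M"
      using Ff Dg by (simp add: L2_def borel_measurable_times borel_measurable_add)
    show "(f (\<psi> (\<tau> z)) + f (\<xi> (\<tau> z))) * (g (\<psi> (\<tau> z)) - g (\<xi> (\<tau> z)))
        = - ((f (\<psi> z) + f (\<xi> z)) * ?Dg z)" if "z \<in> space M" for z
      using that psi_xi_psi xi_inv measurable_space[OF psi_meas] by (simp add: algebra_simps)
  qed
  finally show ?thesis
    using f g by (simp add: ip_Q)
qed

lemma L2_P2op:
  assumes f: "L2 M f"
  shows "L2 M (P2op M \<xi> \<psi> \<phi> f)"
proof -
  let ?D = "\<lambda>z. f (\<psi> z) - f (\<xi> z)"
  have D: "L2 (accepted_flow \<phi>) ?D" by (rule L2_accepted_flow_jump[OF f])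
  have sq: "(accept \<phi> z * d)\<^sup>2 \<le> accept \<phi> z * (d * d)" for z d
  proof -
    have "accept \<phi> z * accept \<phi> z \<le> accept \<phi> z"
      by (rule mult_left_le_one_le[OF accept_nonneg accept_nonneg accept_le_1])
    then have "accept \<phi> z * accept \<phi> z * (d * d) \<le> accept \<phi> z * (d * d)"
      by (rule mult_right_mono) simp
    then show ?thesis
      by (simp add: power2_eq_square algebra_simps)
  qed
  have "L2 M (\<lambda>z. accept \<phi> z * ?D z)"
    unfolding L2_def
  proof
    show meas: "(\<lambda>z. accept \<phi> z * ?D z) \<in> borel_measurable M"
      using D by (simp add: L2_def borel_measurable_times)
    show "integrable M (\<lambda>z. (accept \<phi> z * ?D z)\<^sup>2)"
    proof (rule Bochner_Integration.integrable_bound[OF integrable_accept_mult[OF D D]])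
      show "(\<lambda>z. (accept \<phi> z * ?D z)\<^sup>2) \<in> borel_measurable M"
        using meas by simp
      show "AE z in M. norm ((accept \<phi> z * ?D z)\<^sup>2) \<le> norm (accept \<phi> z * (?D z * ?D z))"
        using sq accept_nonneg by (intro AE_I2) simp
    qed
  qed
  moreover have "P2op M \<xi> \<psi> \<phi> f = (\<lambda>z. Q f z + accept \<phi> z * ?D z)"
    by (simp add: fun_eq_iff P2op_eq precomp_def)
  ultimately show ?thesis
    using L2_add[OF L2_Q[OF f]] by simp
qed

lemma ip_P2op_self_le:
  assumes f: "L2 M f"
  shows "ip M (P2op M \<xi> \<psi> \<phi> f) (P2op M \<xi> \<psi> \<phi> f) \<le> ip M f f"
proof -
  let ?P = "P2op M \<xi> \<psi> \<phi> f" and ?a = "\<lambda>z. f (\<psi> z)" and ?b = "\<lambda>z. f (\<xi> z)"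
  let ?h = "\<lambda>z. ?a z * ?a z - ?b z * ?b z"
  have a: "L2 (accepted_flow \<phi>) ?a" and b: "L2 (accepted_flow \<phi>) ?b"
    using f by (simp_all add: L2_accepted_flow_psi L2_accepted_flow_xi)
  have b2: "integrable M (\<lambda>z. ?b z * ?b z)"
    using integrable_mult_L2[OF L2_Q[OF f] L2_Q[OF f]] by (simp add: precomp_def)
  have wh: "integrable M (\<lambda>z. accept \<phi> z * ?h z)"
    using integrable_accept_mult[OF a a] integrable_accept_mult[OF b b] by (simp add: right_diff_distrib)
  have h: "?h \<in> borel_measurable M"
    using a b by (simp add: L2_def borel_measurable_times borel_measurable_diff)
  txt \<open>Convexity of the square bounds \<open>(P2op \<phi> f)\<^sup>2\<close> by the average of the squares, and the
    accepted flow carries \<open>f \<circ> \<xi>\<close> to \<open>f \<circ> \<psi>\<close>, so the average has the mass of \<open>f\<^sup>2\<close>.\<close>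
  have "ip M ?P ?P \<le> (\<integral>z. ?b z * ?b z + accept \<phi> z * ?h z \<partial>M)"
    unfolding ip_def
  proof (rule integral_mono)
    show "integrable M (\<lambda>z. ?P z * ?P z)"
      by (rule integrable_mult_L2[OF L2_P2op[OF f] L2_P2op[OF f]])
    show "integrable M (\<lambda>z. ?b z * ?b z + accept \<phi> z * ?h z)"
      using b2 wh by simp
    fix z
    have "0 \<le> accept \<phi> z * (1 - accept \<phi> z) * ((?a z - ?b z) * (?a z - ?b z))"
      using accept_nonneg[of z] accept_le_1[of z] by simp
    then show "?P z * ?P z \<le> ?b z * ?b z + accept \<phi> z * ?h z"
      by (simp add: P2op_eq algebra_simps)
  qed
  also have "\<dots> = ip M f f + (\<integral>z. ?h z \<partial>accepted_flow \<phi>)"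
    using b2 wh ip_Q[OF f f] by (simp add: integral_accepted_flow[OF h] ip_def precomp_def)
  also have "(\<integral>z. ?h z \<partial>accepted_flow \<phi>) = 0"
  proof (rule integral_accepted_flow_tau_antisym[OF h])
    show "?h (\<tau> z) = - ?h z" if "z \<in> space M" for z
      using that xi_inv psi_xi_psi measurable_space[OF psi_meas] by simp
  qed
  finally show ?thesis by simp
qed

lemma P2op_reversible_contraction: "reversible_contraction M \<xi> (P2op M \<xi> \<psi> \<phi>)"
proof -
  have "ip M (Q f) (P2op M \<xi> \<psi> \<phi> g) = ip M (Q g) (P2op M \<xi> \<psi> \<phi> f)" if "L2 M f" "L2 M g" for f g
    using ip_Q_P2op[OF that] ip_Q_P2op[OF that(2,1)]
    by (simp add: ip_commute[of M f g] ip_commute[of "accepted_flow \<phi>" "\<lambda>z. f (\<psi> z) - f (\<xi> z)"])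
  then have "reversible M \<xi> (P2op M \<xi> \<psi> \<phi>)"
    using reversible_if_ip_Q_commute[of "P2op M \<xi> \<psi> \<phi>"] L2_P2op by blast
  then show ?thesis
    by (simp add: reversible_contraction_def L2_P2op ip_P2op_self_le)
qed

lemma ip_Q_P2op_self:
  assumes f: "L2 M f"
  shows "ip M (Q f) (P2op M \<xi> \<psi> \<phi> f) = ip M f f - (\<integral>z. accept \<phi> z * (f (\<psi> z) - f (\<xi> z))\<^sup>2 \<partial>M) / 2"
  using ip_Q_P2op[OF f f] L2_accepted_flow_jump[OF f]
  by (simp add: ip_def[of "accepted_flow \<phi>"] integral_accepted_flow L2_def borel_measurable_times
      power2_eq_square)

end

lemma ip_Q_P2op_antimono:
  assumes a: "admissible \<phi>a" and b: "admissible \<phi>b" and le: "\<forall>t\<ge>0. \<phi>b t \<le> \<phi>a t"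
    and x: "L2 M x"
  shows "ip M (Q x) (P2op M \<xi> \<psi> \<phi>a x) \<le> ip M (Q x) (P2op M \<xi> \<psi> \<phi>b x)"
proof -
  let ?D2 = "\<lambda>z. (x (\<psi> z) - x (\<xi> z))\<^sup>2"
  have int: "integrable M (\<lambda>z. accept \<phi> z * ?D2 z)" if "admissible \<phi>" for \<phi>
    using integrable_accept_mult[OF that L2_accepted_flow_jump[OF that x] L2_accepted_flow_jump[OF that x]]
    by (simp add: power2_eq_square)
  have "accept \<phi>b z \<le> accept \<phi>a z" for z
    using le ratio_eq[of z] enn_ratio_nonneg by (simp add: accept_def)
  then have "(\<integral>z. accept \<phi>b z * ?D2 z \<partial>M) \<le> (\<integral>z. accept \<phi>a z * ?D2 z \<partial>M)"
    by (intro integral_mono int[OF a] int[OF b] mult_right_mono) auto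
  then show ?thesis
    by (simp add: ip_Q_P2op_self[OF a x] ip_Q_P2op_self[OF b x])
qed

lemma var_lam_P2op_antimono:
  assumes K: "K \<in> M \<rightarrow>\<^sub>M prob_algebra M" "reversible M \<xi> (kop K)"
    and a: "admissible \<phi>a" and b: "admissible \<phi>b" and le: "\<forall>t\<ge>0. \<phi>b t \<le> \<phi>a t"
    and f: "L2 M f" "AE x in M. f (\<xi> x) = f x" and lam: "0 \<le> lam" "lam < 1"
  shows "var_lam M lam f (kop K) (P2op M \<xi> \<psi> \<phi>a) \<le> var_lam M lam f (kop K) (P2op M \<xi> \<psi> \<phi>b)"
  using prob_space.finite_measure[OF prob] kop_reversible_contraction[OF prob K]
    P2op_reversible_contraction[OF a] P2op_reversible_contraction[OF b]
    ip_Q_P2op_antimono[OF a b le] f lam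
  by (rule var_lam_mono)

end

section \<open>Optimality of the Metropolis acceptance function\<close>

lemma admissible_min_1: "admissible (\<lambda>t::real. min 1 t)"
  unfolding admissible_def
proof (intro conjI allI impI)
  fix t :: real assume "t > 0"
  then show "t * min 1 (1 / t) = min 1 t"
    by (cases "t \<le> 1") (auto simp: min_def field_simps)
qed auto

lemma admissible_le_min_1:
  assumes "admissible \<phi>"
  shows "\<forall>t\<ge>0. \<phi> t \<le> min 1 t"
proof (intro allI impI)
  fix t :: real assume "0 \<le> t"
  show "\<phi> t \<le> min 1 t"
  proof (cases "t = 0")
    case False
    with assms \<open>0 \<le> t\<close> have "t * \<phi> (1 / t) = \<phi> t" "\<phi> (1 / t) \<le> 1" "0 < t"
      by (simp_all add: admissible_def)
    then have "\<phi> t \<le> t"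
      using mult_left_mono[of "\<phi> (1 / t)" 1 t] by simp
    with assms \<open>0 \<le> t\<close> show ?thesis by (simp add: admissible_def)
  qed (use assms in \<open>simp add: admissible_def\<close>)
qed

theorem theorem3p8:
  fixes M :: "'a measure" and \<xi> \<psi> :: "'a \<Rightarrow> 'a" and K :: "'a \<Rightarrow> 'a measure"
    and \<phi>1 \<phi>2 :: "real \<Rightarrow> real"
  assumes prob: "prob_space M"
    and xi_meas: "\<xi> \<in> measurable M M"
    and xi_inv: "\<forall>x\<in>space M. \<xi> (\<xi> x) = x"
    and xi_pres: "distr M M \<xi> = M"
    and psi_meas: "\<psi> \<in> measurable M M"
    and psi_bij: "bij_betw \<psi> (space M) (space M)"
    and psi_inv: "\<forall>x\<in>space M. the_inv_into (space M) \<psi> x = \<xi> (\<psi> (\<xi> x))"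
    and adm1: "admissible \<phi>1" and adm2: "admissible \<phi>2"
    and K_markov: "markov_kernel M K"
    and K_rev: "reversible M \<xi> (kop K)"
    and phi_le: "\<forall>t\<ge>0. \<phi>2 t \<le> \<phi>1 t"
  shows "(\<forall>f lam. L2 M f \<longrightarrow> (AE x in M. f (\<xi> x) = f x) \<longrightarrow> 0 \<le> lam \<longrightarrow> lam < 1 \<longrightarrow>
           var_lam M lam f (kop K) (P2op M \<xi> \<psi> \<phi>1)
             \<le> var_lam M lam f (kop K) (P2op M \<xi> \<psi> \<phi>2))
    \<and> (\<forall>\<phi> f lam. admissible \<phi> \<longrightarrow> L2 M f \<longrightarrow> (AE x in M. f (\<xi> x) = f x)
           \<longrightarrow> 0 \<le> lam \<longrightarrow> lam < 1 \<longrightarrow>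
           var_lam M lam f (kop K) (P2op M \<xi> \<psi> (\<lambda>t. min 1 t))
             \<le> var_lam M lam f (kop K) (P2op M \<xi> \<psi> \<phi>))"
proof -
  interpret involutive_proposal M \<xi> \<psi>
    by (rule involutive_proposal.intro[OF measure_preserving_involution.intro[OF xi_meas xi_inv xi_pres]
          involutive_proposal_axioms.intro[OF prob psi_meas psi_bij psi_inv]])
  note mono = var_lam_P2op_antimono[OF K_markov[unfolded markov_kernel_def] K_rev]
  show ?thesis
    using mono[OF adm1 adm2 phi_le] mono[OF admissible_min_1 _ admissible_le_min_1] by blast
qed

end
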